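(* The following are equivalent for an integral domain $D$: (1) for every nonzero nonunit $x$ of $D$, $xD$ is a $\ast$-product of finitely many $\ast$-f-homog ideals of type $1$; (2) $D$ is a GCD domain that is a $\ast$-GKD.
   Context: $\ast$ is a star operation on $D$ of finite character. A $\ast$-ideal is a nonzero fractional ideal $I$ with $I^\ast=I$; of finite type if $I=J^\ast$ for some nonzero finitely generated $J$. A maximal $\ast$-ideal is an integral $\ast$-ideal maximal among proper integral $\ast$-ideals. A $\ast$-homog ideal is a proper integral $\ast$-ideal $I$ of finite type such that $(A+B)^\ast\neq D$ for every pair $A,B$ of proper integral $\ast$-ideals of finite type containing $I$; it lies in a unique maximal $\ast$-ideal $M(I)$. It is of type $1$ if for each $x\in M(I)\setminus\{0\}$ there is $n\ge1$ with $x^nD_{M(I)}\cap D\subseteq I$. A $\ast$-f-homog ideal is a $\ast$-homog ideal $I$ such that every $\ast$-ideal of finite type containing $I$ is principal; it is of type $1$ if it is also a $\ast$-homog ideal of type $1$. $D$ is a $\ast$-IRKT if $D_P$ is a valuation domain for every maximal $\ast$-ideal $P$, $D=\bigcap_P D_P$ over the maximal $\ast$-ideals with the intersection locally finite, and no two distinct maximal $\ast$-ideals contain a common nonzero prime ideal; $D$ is a $\ast$-GKD if it is a $\ast$-IRKT all of whose maximal $\ast$-ideals have height $1$. *)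

theory Defs
  imports Main
begin

text \<open>The integral domain D is modelled as a subring of a field 'k
(every integral domain is such a subring of its quotient field).
Fractional ideals live inside the quotient field of D, realised in 'k.\<close>

definition subring :: "'k::field set \<Rightarrow> bool" where
  "subring D \<longleftrightarrow> 0 \<in> D \<and> 1 \<in> D \<and>
     (\<forall>a\<in>D. \<forall>b\<in>D. a + b \<in> D \<and> a - b \<in> D \<and> a * b \<in> D)"

definition qf :: "'k::field set \<Rightarrow> 'k set" where
  "qf D = {a / b | a b. a \<in> D \<and> b \<in> D \<and> b \<noteq> 0}"

definition is_unit_in :: "'k::field set \<Rightarrow> 'k \<Rightarrow> bool" where
  "is_unit_in D x \<longleftrightarrow> x \<in> D \<and> (\<exists>y\<in>D. x * y = 1)"

definition dvd_in :: "'k::field set \<Rightarrow> 'k \<Rightarrow> 'k \<Rightarrow> bool" where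
  "dvd_in D a b \<longleftrightarrow> (\<exists>c\<in>D. b = a * c)"

definition gcd_domain :: "'k::field set \<Rightarrow> bool" where
  "gcd_domain D \<longleftrightarrow> subring D \<and>
     (\<forall>a\<in>D. \<forall>b\<in>D. a \<noteq> 0 \<longrightarrow> b \<noteq> 0 \<longrightarrow>
        (\<exists>d\<in>D. dvd_in D d a \<and> dvd_in D d b \<and>
           (\<forall>e\<in>D. dvd_in D e a \<longrightarrow> dvd_in D e b \<longrightarrow> dvd_in D e d)))"

definition submod :: "'k::field set \<Rightarrow> 'k set \<Rightarrow> bool" where
  "submod D I \<longleftrightarrow> 0 \<in> I \<and> (\<forall>a\<in>I. \<forall>b\<in>I. a + b \<in> I) \<and> (\<forall>d\<in>D. \<forall>a\<in>I. d * a \<in> I)"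

definition frac_ideal :: "'k::field set \<Rightarrow> 'k set \<Rightarrow> bool" where
  "frac_ideal D I \<longleftrightarrow> submod D I \<and> (\<exists>d\<in>D. d \<noteq> 0 \<and> (\<forall>a\<in>I. d * a \<in> D))"

definition nz_frac :: "'k::field set \<Rightarrow> 'k set \<Rightarrow> bool" where
  "nz_frac D I \<longleftrightarrow> frac_ideal D I \<and> I \<noteq> {0}"

definition gen_submod :: "'k::field set \<Rightarrow> 'k set \<Rightarrow> 'k set" where
  "gen_submod D S = {(\<Sum>i<(n::nat). c i * s i) | n c s. \<forall>i<n. c i \<in> D \<and> s i \<in> S}"

definition fin_gen :: "'k::field set \<Rightarrow> 'k set \<Rightarrow> bool" where
  "fin_gen D J \<longleftrightarrow> (\<exists>S. finite S \<and> J = gen_submod D S)"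

definition princ :: "'k::field set \<Rightarrow> 'k \<Rightarrow> 'k set" where
  "princ D x = {x * d | d. d \<in> D}"

definition ideal_sum :: "'k::field set \<Rightarrow> 'k set \<Rightarrow> 'k set" where
  "ideal_sum A B = {a + b | a b. a \<in> A \<and> b \<in> B}"

definition ideal_prod :: "'k::field set \<Rightarrow> 'k set \<Rightarrow> 'k set" where
  "ideal_prod A B = {(\<Sum>i<(n::nat). a i * b i) | n a b. \<forall>i<n. a i \<in> A \<and> b i \<in> B}"

definition ideal_prod_list :: "'k::field set \<Rightarrow> 'k set list \<Rightarrow> 'k set" where
  "ideal_prod_list D Is = foldr ideal_prod Is D"

definition star_op :: "'k::field set \<Rightarrow> ('k set \<Rightarrow> 'k set) \<Rightarrow> bool" where
  "star_op D st \<longleftrightarrow>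
     (\<forall>I. nz_frac D I \<longrightarrow> nz_frac D (st I)) \<and>
     (\<forall>x\<in>qf D. x \<noteq> 0 \<longrightarrow> st (princ D x) = princ D x) \<and>
     (\<forall>x\<in>qf D. \<forall>I. x \<noteq> 0 \<longrightarrow> nz_frac D I \<longrightarrow> st ((*) x ` I) = (*) x ` st I) \<and>
     (\<forall>I. nz_frac D I \<longrightarrow> I \<subseteq> st I) \<and>
     (\<forall>I J. nz_frac D I \<longrightarrow> nz_frac D J \<longrightarrow> I \<subseteq> J \<longrightarrow> st I \<subseteq> st J) \<and>
     (\<forall>I. nz_frac D I \<longrightarrow> st (st I) = st I)"

definition finite_character :: "'k::field set \<Rightarrow> ('k set \<Rightarrow> 'k set) \<Rightarrow> bool" where
  "finite_character D st \<longleftrightarrow>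
     (\<forall>I. nz_frac D I \<longrightarrow>
        st I = \<Union>{st J | J. J \<subseteq> I \<and> nz_frac D J \<and> fin_gen D J})"

definition star_ideal :: "'k::field set \<Rightarrow> ('k set \<Rightarrow> 'k set) \<Rightarrow> 'k set \<Rightarrow> bool" where
  "star_ideal D st I \<longleftrightarrow> nz_frac D I \<and> st I = I"

definition finite_type :: "'k::field set \<Rightarrow> ('k set \<Rightarrow> 'k set) \<Rightarrow> 'k set \<Rightarrow> bool" where
  "finite_type D st I \<longleftrightarrow> (\<exists>J. nz_frac D J \<and> fin_gen D J \<and> I = st J)"

definition proper_int_star :: "'k::field set \<Rightarrow> ('k set \<Rightarrow> 'k set) \<Rightarrow> 'k set \<Rightarrow> bool" where
  "proper_int_star D st I \<longleftrightarrow> star_ideal D st I \<and> I \<subseteq> D \<and> I \<noteq> D"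

definition max_star :: "'k::field set \<Rightarrow> ('k set \<Rightarrow> 'k set) \<Rightarrow> 'k set \<Rightarrow> bool" where
  "max_star D st P \<longleftrightarrow> proper_int_star D st P \<and>
     (\<forall>J. proper_int_star D st J \<longrightarrow> P \<subseteq> J \<longrightarrow> J = P)"

definition star_homog :: "'k::field set \<Rightarrow> ('k set \<Rightarrow> 'k set) \<Rightarrow> 'k set \<Rightarrow> bool" where
  "star_homog D st I \<longleftrightarrow> proper_int_star D st I \<and> finite_type D st I \<and>
     (\<forall>A B. proper_int_star D st A \<longrightarrow> finite_type D st A \<longrightarrow> I \<subseteq> A \<longrightarrow>
            proper_int_star D st B \<longrightarrow> finite_type D st B \<longrightarrow> I \<subseteq> B \<longrightarrow>
            st (ideal_sum A B) \<noteq> D)"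

text \<open>M(I): the (unique) maximal star-ideal containing I\<close>
definition M_of :: "'k::field set \<Rightarrow> ('k set \<Rightarrow> 'k set) \<Rightarrow> 'k set \<Rightarrow> 'k set" where
  "M_of D st I = (THE M. max_star D st M \<and> I \<subseteq> M)"

definition loc :: "'k::field set \<Rightarrow> 'k set \<Rightarrow> 'k set" where
  "loc D P = {a / s | a s. a \<in> D \<and> s \<in> D \<and> s \<notin> P}"

definition homog_type1 :: "'k::field set \<Rightarrow> ('k set \<Rightarrow> 'k set) \<Rightarrow> 'k set \<Rightarrow> bool" where
  "homog_type1 D st I \<longleftrightarrow> star_homog D st I \<and>
     (\<forall>x\<in>M_of D st I. x \<noteq> 0 \<longrightarrow>
        (\<exists>n\<ge>1. ((*) (x ^ n) ` loc D (M_of D st I)) \<inter> D \<subseteq> I))"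

definition star_fhomog :: "'k::field set \<Rightarrow> ('k set \<Rightarrow> 'k set) \<Rightarrow> 'k set \<Rightarrow> bool" where
  "star_fhomog D st I \<longleftrightarrow> star_homog D st I \<and>
     (\<forall>J. star_ideal D st J \<longrightarrow> finite_type D st J \<longrightarrow> I \<subseteq> J \<longrightarrow> (\<exists>y. J = princ D y))"

definition fhomog_type1 :: "'k::field set \<Rightarrow> ('k set \<Rightarrow> 'k set) \<Rightarrow> 'k set \<Rightarrow> bool" where
  "fhomog_type1 D st I \<longleftrightarrow> star_fhomog D st I \<and> homog_type1 D st I"

definition valuation_domain :: "'k::field set \<Rightarrow> bool" where
  "valuation_domain V \<longleftrightarrow> subring V \<and>
     (\<forall>x\<in>qf V. x \<noteq> 0 \<longrightarrow> x \<in> V \<or> inverse x \<in> V)"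

definition prime_ideal :: "'k::field set \<Rightarrow> 'k set \<Rightarrow> bool" where
  "prime_ideal D Q \<longleftrightarrow> submod D Q \<and> Q \<subseteq> D \<and> Q \<noteq> D \<and>
     (\<forall>a\<in>D. \<forall>b\<in>D. a * b \<in> Q \<longrightarrow> a \<in> Q \<or> b \<in> Q)"

definition height_one :: "'k::field set \<Rightarrow> 'k set \<Rightarrow> bool" where
  "height_one D P \<longleftrightarrow> prime_ideal D P \<and> P \<noteq> {0} \<and>
     (\<forall>Q. prime_ideal D Q \<longrightarrow> Q \<noteq> {0} \<longrightarrow> Q \<subseteq> P \<longrightarrow> Q = P)"

definition star_IRKT :: "'k::field set \<Rightarrow> ('k set \<Rightarrow> 'k set) \<Rightarrow> bool" where
  "star_IRKT D st \<longleftrightarrow>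
     (\<forall>P. max_star D st P \<longrightarrow> valuation_domain (loc D P)) \<and>
     D = qf D \<inter> \<Inter>{loc D P | P. max_star D st P} \<and>
     (\<forall>x\<in>D. x \<noteq> 0 \<longrightarrow> finite {P. max_star D st P \<and> x \<in> P}) \<and>
     (\<forall>P1 P2. max_star D st P1 \<longrightarrow> max_star D st P2 \<longrightarrow> P1 \<noteq> P2 \<longrightarrow>
        \<not> (\<exists>Q. prime_ideal D Q \<and> Q \<noteq> {0} \<and> Q \<subseteq> P1 \<and> Q \<subseteq> P2))"

definition star_GKD :: "'k::field set \<Rightarrow> ('k set \<Rightarrow> 'k set) \<Rightarrow> bool" where
  "star_GKD D st \<longleftrightarrow> star_IRKT D st \<and> (\<forall>P. max_star D st P \<longrightarrow> height_one D P)"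

end

theory Submission
  imports Defs
begin

text \<open>
  (1) \<Longrightarrow> (2). Up to a unit, every nonzero x is a product of elements y with yD f-homogeneous
  of type 1. Such a y lies in a unique maximal star ideal M(y), and the star of yD + bD is
  principal for every b, which makes yD \<inter> bD principal; least common multiples are
  multiplicative, so D is a GCD domain. Every nonzero prime contains such a factor y; with
  coprime fractions this gives the valuation property of D_P, the intersection property and
  local finiteness, while uniqueness of M(y) separates the maximal star ideals and type 1
  forces height one.

  (2) \<Longrightarrow> (1). Coprime elements are star-comaximal, by comparability in the valuation rings
  D_P, so stars of finitely generated ideals are principal. Height one says that every
  element of P has a power in x D_P whenever 0 \<noteq> x \<in> P, and this lets one split off a
  factor g of x lying in P and in no other maximal star ideal; gD is f-homogeneous of
  type 1, and induction on the number of maximal star ideals containing x concludes.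
\<close>

section \<open>Subrings of a field\<close>

locale subring_domain =
  fixes D :: "'k::field set"
  assumes subring: "subring D"
begin

lemma zero_in [simp, intro]: "0 \<in> D" and one_in [simp, intro]: "1 \<in> D"
  using subring by (auto simp: subring_def)

lemma add_in [intro]: "a \<in> D \<Longrightarrow> b \<in> D \<Longrightarrow> a + b \<in> D"
  and diff_in [intro]: "a \<in> D \<Longrightarrow> b \<in> D \<Longrightarrow> a - b \<in> D"
  and mult_in [intro]: "a \<in> D \<Longrightarrow> b \<in> D \<Longrightarrow> a * b \<in> D"
  using subring by (auto simp: subring_def)

lemma uminus_in [intro]: "a \<in> D \<Longrightarrow> - a \<in> D"
  using diff_in[of 0 a] by simp

lemma power_in [intro]: "a \<in> D \<Longrightarrow> a ^ n \<in> D"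
  by (induction n) auto

lemma sum_in [intro]: "(\<And>i. i \<in> A \<Longrightarrow> f i \<in> D) \<Longrightarrow> sum f A \<in> D"
  by (induction A rule: infinite_finite_induct) auto

lemma prod_list_in [intro]: "set xs \<subseteq> D \<Longrightarrow> prod_list xs \<in> D"
  by (induction xs) auto

lemma in_qf: "a \<in> D \<Longrightarrow> a \<in> qf D"
  unfolding qf_def by (rule CollectI, rule exI[of _ a], rule exI[of _ 1]) auto

lemma qfE:
  assumes "x \<in> qf D"
  obtains a b where "a \<in> D" "b \<in> D" "b \<noteq> 0" "x = a / b"
  using assms unfolding qf_def by auto

lemma qfI: "a \<in> D \<Longrightarrow> b \<in> D \<Longrightarrow> b \<noteq> 0 \<Longrightarrow> a / b \<in> qf D"
  unfolding qf_def by auto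

lemma qf_zero [simp, intro]: "0 \<in> qf D"
  using in_qf by auto

lemma qf_mult [intro]: "x \<in> qf D \<Longrightarrow> y \<in> qf D \<Longrightarrow> x * y \<in> qf D"
  by (elim qfE) (use qfI mult_in in \<open>auto simp: mult_divide_mult_cancel_left_if\<close>)

lemma qf_inverse [intro]: "x \<in> qf D \<Longrightarrow> inverse x \<in> qf D"
proof (elim qfE)
  fix a b assume "a \<in> D" "b \<in> D" "b \<noteq> 0" "x = a / b"
  thus ?thesis using qfI[of b a] by (cases "a = 0") auto
qed

lemma qf_divide [intro]: "x \<in> qf D \<Longrightarrow> y \<in> qf D \<Longrightarrow> x / y \<in> qf D"
  by (simp add: divide_inverse qf_mult qf_inverse)

lemma is_unit_in_iff: "is_unit_in D x \<longleftrightarrow> x \<in> D \<and> x \<noteq> 0 \<and> inverse x \<in> D"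
  unfolding is_unit_in_def
  by (metis field_class.field_inverse inverse_unique mult_zero_left zero_neq_one)

lemma dvd_in_refl: "a \<in> D \<Longrightarrow> dvd_in D a a"
  unfolding dvd_in_def by (rule bexI[of _ 1]) auto

lemma dvd_in_trans: "dvd_in D a b \<Longrightarrow> dvd_in D b c \<Longrightarrow> dvd_in D a c"
  unfolding dvd_in_def by (metis mult.assoc mult_in)

lemma dvd_in_mult_left: "dvd_in D a b \<Longrightarrow> c \<in> D \<Longrightarrow> dvd_in D a (c * b)"
  unfolding dvd_in_def by (metis mult_in mult.left_commute)

lemma dvd_in_cancel: "c \<noteq> 0 \<Longrightarrow> dvd_in D (c * a) (c * b) \<Longrightarrow> dvd_in D a b"
  unfolding dvd_in_def by (metis mult.assoc mult_left_cancel)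

lemma dvd_in_mult_mono: "dvd_in D a b \<Longrightarrow> c \<in> D \<Longrightarrow> dvd_in D (c * a) (c * b)"
  unfolding dvd_in_def by (metis mult.assoc)

lemma dvd_in_one_imp_unit: "dvd_in D a 1 \<Longrightarrow> a \<in> D \<Longrightarrow> is_unit_in D a"
  unfolding dvd_in_def is_unit_in_def by metis

lemma dvd_in_zero: "dvd_in D a 0"
  unfolding dvd_in_def by (metis mult_zero_right zero_in)

lemma dvd_in_prod_list: "set ys \<subseteq> D \<Longrightarrow> y \<in> set ys \<Longrightarrow> dvd_in D y (prod_list ys)"
proof (induction ys)
  case (Cons z ys)
  show ?case
  proof (cases "y = z")
    case True
    thus ?thesis using Cons.prems prod_list_in unfolding dvd_in_def by auto
  next
    case False
    thus ?thesis using Cons dvd_in_mult_left by auto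
  qed
qed simp

lemma princ_iff: "y \<in> princ D x \<longleftrightarrow> (\<exists>d\<in>D. y = x * d)"
  unfolding princ_def by auto

lemma princ_memI [intro]: "d \<in> D \<Longrightarrow> x * d \<in> princ D x"
  unfolding princ_def by auto

lemma princ_self [intro]: "x \<in> princ D x"
  using princ_memI[of 1 x] by simp

lemma princ_iff_dvd_in: "y \<in> princ D x \<longleftrightarrow> dvd_in D x y"
  unfolding princ_iff dvd_in_def by auto

lemma princ_one [simp]: "princ D 1 = D"
  unfolding princ_def by auto

lemma princ_zero [simp]: "princ D 0 = {0}"
  unfolding princ_def by auto

lemma princ_subset: "x \<in> D \<Longrightarrow> princ D x \<subseteq> D"
  unfolding princ_def by auto

lemma image_mult_princ: "(*) c ` princ D x = princ D (c * x)"
  unfolding princ_def by (auto simp: image_iff mult.assoc)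

lemma princ_eq_imp_associated:
  assumes a: "a \<in> D" and eq: "princ D a = princ D b"
  shows "\<exists>u. is_unit_in D u \<and> a = b * u"
proof -
  obtain u where u: "u \<in> D" "a = b * u" using princ_self[of a] eq princ_iff by blast
  obtain v where v: "v \<in> D" "b = a * v" using princ_self[of b] eq princ_iff by blast
  show ?thesis
  proof (cases "a = 0")
    case True
    thus ?thesis using v by (intro exI[of _ 1]) (auto simp: is_unit_in_def)
  next
    case False
    hence "u * v = 1" using u v by (metis mult.assoc mult_cancel_left1)
    thus ?thesis using u v unfolding is_unit_in_def by auto
  qed
qed

lemma princ_mult_unit:
  assumes "is_unit_in D u"
  shows "princ D (b * u) = princ D b"
proof -
  obtain v where v: "u \<in> D" "v \<in> D" "u * v = 1" using assms unfolding is_unit_in_def by auto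
  show ?thesis unfolding princ_iff set_eq_iff
  proof (intro allI iffI)
    fix y assume "\<exists>d\<in>D. y = b * u * d"
    thus "\<exists>d\<in>D. y = b * d" using v by (auto simp: mult.assoc)
  next
    fix y assume "\<exists>d\<in>D. y = b * d"
    then obtain d where "d \<in> D" "y = b * d" by auto
    moreover have "b * d = b * u * (v * d)"
      using v by (simp add: mult.assoc[symmetric] mult.commute[of b])
    ultimately show "\<exists>d\<in>D. y = b * u * d" using v by blast
  qed
qed

lemma princ_unit: "is_unit_in D u \<Longrightarrow> princ D u = D"
  using princ_mult_unit[of u 1] by simp

lemma submod_0: "submod D I \<Longrightarrow> 0 \<in> I"
  unfolding submod_def by auto

lemma submod_add: "submod D I \<Longrightarrow> a \<in> I \<Longrightarrow> b \<in> I \<Longrightarrow> a + b \<in> I"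
  unfolding submod_def by auto

lemma submod_mult: "submod D I \<Longrightarrow> d \<in> D \<Longrightarrow> a \<in> I \<Longrightarrow> d * a \<in> I"
  unfolding submod_def by auto

lemma submod_mult_right: "submod D I \<Longrightarrow> d \<in> D \<Longrightarrow> a \<in> I \<Longrightarrow> a * d \<in> I"
  using submod_mult by (metis mult.commute)

lemma submod_sum: "submod D I \<Longrightarrow> (\<And>i. i \<in> A \<Longrightarrow> f i \<in> I) \<Longrightarrow> sum f A \<in> I"
  by (induction A rule: infinite_finite_induct) (auto intro: submod_0 submod_add)

lemma submod_self: "submod D D"
  unfolding submod_def by auto

lemma submod_princ: "submod D (princ D x)"
  unfolding submod_def
proof (intro conjI ballI)
  show "0 \<in> princ D x" using princ_memI[of 0 x] by simp
next
  fix a b assume "a \<in> princ D x" "b \<in> princ D x"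
  then obtain d e where "d \<in> D" "e \<in> D" "a = x * d" "b = x * e" unfolding princ_iff by blast
  thus "a + b \<in> princ D x"
    unfolding princ_iff by (intro bexI[of _ "d+e"]) (auto simp: distrib_left)
next
  fix c a assume "c \<in> D" "a \<in> princ D x"
  then obtain d where "d \<in> D" "a = x * d" unfolding princ_iff by blast
  thus "c * a \<in> princ D x"
    unfolding princ_iff using \<open>c \<in> D\<close> by (intro bexI[of _ "c*d"]) (auto simp: mult.left_commute)
qed

lemma princ_least: "submod D I \<Longrightarrow> x \<in> I \<Longrightarrow> princ D x \<subseteq> I"
  unfolding princ_def using submod_mult_right by blast

lemma submod_eq_if_one: "submod D I \<Longrightarrow> I \<subseteq> D \<Longrightarrow> 1 \<in> I \<Longrightarrow> I = D"
  using princ_least[of I 1] by auto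

lemma submod_eq_if_unit: "submod D I \<Longrightarrow> I \<subseteq> D \<Longrightarrow> x \<in> I \<Longrightarrow> is_unit_in D x \<Longrightarrow> I = D"
  unfolding is_unit_in_def using submod_mult submod_eq_if_one by (metis mult.commute)

lemma submod_Union_chain:
  assumes C: "C \<noteq> {}" "\<And>X. X \<in> C \<Longrightarrow> submod D X"
    and ch: "\<And>X Y. X \<in> C \<Longrightarrow> Y \<in> C \<Longrightarrow> X \<subseteq> Y \<or> Y \<subseteq> X"
  shows "submod D (\<Union>C)"
  unfolding submod_def
proof (intro conjI ballI)
  show "0 \<in> \<Union>C" using C submod_0 by blast
next
  fix a b assume "a \<in> \<Union>C" "b \<in> \<Union>C"
  then obtain X Y where "X \<in> C" "Y \<in> C" "a \<in> X" "b \<in> Y" by blast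
  thus "a + b \<in> \<Union>C" using ch C(2) submod_add by (metis UnionI subset_iff)
next
  fix d a assume "d \<in> D" "a \<in> \<Union>C"
  thus "d * a \<in> \<Union>C" using C(2) submod_mult by blast
qed

lemma submod_image_mult: "submod D I \<Longrightarrow> submod D ((*) c ` I)"
  unfolding submod_def
  by (auto simp: image_iff distrib_left[symmetric] mult.left_commute[of _ c])

lemma frac_ideal_mem_qf: "frac_ideal D I \<Longrightarrow> a \<in> I \<Longrightarrow> a \<in> qf D"
proof -
  assume "frac_ideal D I" "a \<in> I"
  then obtain d where "d \<in> D" "d \<noteq> 0" "d * a \<in> D" unfolding frac_ideal_def by blast
  thus ?thesis using qfI[of "d * a" d] by simp
qed

lemma nz_frac_integral: "submod D I \<Longrightarrow> I \<subseteq> D \<Longrightarrow> I \<noteq> {0} \<Longrightarrow> nz_frac D I"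
  unfolding nz_frac_def frac_ideal_def by (auto intro!: bexI[of _ 1])

lemma nz_frac_ex_nonzero: "nz_frac D I \<Longrightarrow> \<exists>a\<in>I. a \<noteq> 0"
  unfolding nz_frac_def frac_ideal_def using submod_0 by blast

lemma nz_frac_submod: "nz_frac D I \<Longrightarrow> submod D I"
  unfolding nz_frac_def frac_ideal_def by blast

lemma nz_frac_princ: "x \<in> qf D \<Longrightarrow> x \<noteq> 0 \<Longrightarrow> nz_frac D (princ D x)"
proof (elim qfE)
  fix a b assume ab: "a \<in> D" "b \<in> D" "b \<noteq> 0" "x = a / b" and x0: "x \<noteq> 0"
  have "\<forall>y\<in>princ D x. b * y \<in> D"
  proof
    fix y assume "y \<in> princ D x"
    then obtain d where "d \<in> D" "y = x * d" unfolding princ_iff by blast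
    moreover have "b * (x * d) = a * d" using ab by simp
    ultimately show "b * y \<in> D" using ab by auto
  qed
  hence "frac_ideal D (princ D x)"
    unfolding frac_ideal_def using submod_princ ab by blast
  moreover have "princ D x \<noteq> {0}" using princ_self[of x] x0 by blast
  ultimately show ?thesis unfolding nz_frac_def by auto
qed

lemma nz_frac_image_mult:
  assumes c: "c \<in> qf D" "c \<noteq> 0" and I: "nz_frac D I"
  shows "nz_frac D ((*) c ` I)"
proof -
  obtain a b where ab: "a \<in> D" "b \<in> D" "b \<noteq> 0" "c = a / b" using c(1) by (rule qfE)
  obtain d where d: "d \<in> D" "d \<noteq> 0" "\<forall>x\<in>I. d * x \<in> D"
    using I unfolding nz_frac_def frac_ideal_def by blast
  have "\<forall>y\<in>(*) c ` I. (b * d) * y \<in> D"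
  proof
    fix y assume "y \<in> (*) c ` I"
    then obtain x where x: "x \<in> I" "y = c * x" by blast
    have "(b * d) * (c * x) = a * (d * x)" using ab by simp
    moreover have "a * (d * x) \<in> D" using ab d x by blast
    ultimately show "(b * d) * y \<in> D" using x by (simp only:)
  qed
  moreover have "submod D ((*) c ` I)" using submod_image_mult nz_frac_submod[OF I] by blast
  moreover have "b * d \<in> D" "b * d \<noteq> 0" using ab d by auto
  ultimately have "frac_ideal D ((*) c ` I)" unfolding frac_ideal_def by blast
  moreover obtain x where "x \<in> I" "x \<noteq> 0" using nz_frac_ex_nonzero I by blast
  hence "c * x \<in> (*) c ` I" "c * x \<noteq> 0" using c by auto
  ultimately show ?thesis unfolding nz_frac_def by (metis singletonD)
qed

lemma gen_submod_iff:
  "x \<in> gen_submod D S \<longleftrightarrow>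
     (\<exists>n c s. (\<forall>i<n. c i \<in> D \<and> s i \<in> S) \<and> x = (\<Sum>i<(n::nat). c i * s i))"
  unfolding gen_submod_def by auto

lemma gen_submod_superset: "S \<subseteq> gen_submod D S"
proof
  fix x assume "x \<in> S"
  thus "x \<in> gen_submod D S" unfolding gen_submod_iff
    by (intro exI[of _ 1] exI[of _ "\<lambda>_. 1"] exI[of _ "\<lambda>_. x"]) auto
qed

lemma gen_submod_least: "submod D M \<Longrightarrow> S \<subseteq> M \<Longrightarrow> gen_submod D S \<subseteq> M"
  unfolding gen_submod_def by (auto intro!: submod_sum submod_mult)

lemma submod_gen_submod: "submod D (gen_submod D S)"
  unfolding submod_def
proof (intro conjI ballI)
  show "0 \<in> gen_submod D S" unfolding gen_submod_iff by (intro exI[of _ 0]) auto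
next
  fix a b assume "a \<in> gen_submod D S" "b \<in> gen_submod D S"
  then obtain n c s m c' s' where h [rule_format]:
    "\<forall>i<(n::nat). c i \<in> D \<and> s i \<in> S" "a = (\<Sum>i<n. c i * s i)"
    "\<forall>i<(m::nat). c' i \<in> D \<and> s' i \<in> S" "b = (\<Sum>i<m. c' i * s' i)"
    unfolding gen_submod_iff by blast
  define C where "C i = (if i < n then c i else c' (i - n))" for i
  define T where "T i = (if i < n then s i else s' (i - n))" for i
  have split: "(\<Sum>i<n+k. f i) = (\<Sum>i<n. f i) + (\<Sum>i<k. f (n + i))" for f :: "nat \<Rightarrow> 'k" and k
    by (induction k) (auto simp: add.assoc)
  have "a + b = (\<Sum>i<n+m. C i * T i)"
    unfolding split h C_def T_def by simp
  moreover have "\<forall>i<n+m. C i \<in> D \<and> T i \<in> S" using h unfolding C_def T_def by auto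
  ultimately show "a + b \<in> gen_submod D S" unfolding gen_submod_iff by blast
next
  fix d a assume "d \<in> D" "a \<in> gen_submod D S"
  then obtain n c s where h: "\<forall>i<(n::nat). c i \<in> D \<and> s i \<in> S" "a = (\<Sum>i<n. c i * s i)"
    unfolding gen_submod_iff by blast
  have "d * a = (\<Sum>i<n. (d * c i) * s i)"
    unfolding h by (simp add: sum_distrib_left mult.assoc)
  thus "d * a \<in> gen_submod D S" unfolding gen_submod_iff using h(1) \<open>d \<in> D\<close>
    by (intro exI[of _ n] exI[of _ "\<lambda>i. d * c i"] exI[of _ s]) auto
qed

lemma gen_submod_mono: "S \<subseteq> T \<Longrightarrow> gen_submod D S \<subseteq> gen_submod D T"
  using gen_submod_least[OF submod_gen_submod] gen_submod_superset by blast

lemma gen_submod_singleton: "gen_submod D {a} = princ D a"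
  using gen_submod_least[OF submod_princ, of "{a}" a]
    princ_least[OF submod_gen_submod, of a "{a}"] gen_submod_superset[of "{a}"]
  by auto

lemma gen_submod_subset_zero: "S \<subseteq> {0} \<Longrightarrow> gen_submod D S = {0}"
  using gen_submod_least[OF submod_princ, of S 0] submod_0[OF submod_gen_submod, of S]
  unfolding princ_zero by blast

lemma image_mult_gen_submod: "(*) c ` gen_submod D S = gen_submod D ((*) c ` S)"
proof
  show "(*) c ` gen_submod D S \<subseteq> gen_submod D ((*) c ` S)"
  proof
    fix y assume "y \<in> (*) c ` gen_submod D S"
    then obtain x where x: "x \<in> gen_submod D S" "y = c * x" by blast
    then obtain n f g where h: "\<forall>i<(n::nat). f i \<in> D \<and> g i \<in> S" "x = (\<Sum>i<n. f i * g i)"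
      unfolding gen_submod_iff by blast
    have e: "y = (\<Sum>i<n. f i * (c * g i))"
      unfolding h x by (simp add: sum_distrib_left algebra_simps)
    have "\<forall>i<n. f i \<in> D \<and> c * g i \<in> (*) c ` S" using h(1) by blast
    thus "y \<in> gen_submod D ((*) c ` S)" unfolding gen_submod_iff
      by (intro exI[of _ n] exI[of _ f] exI[of _ "\<lambda>i. c * g i"] conjI e)
  qed
  have "(*) c ` S \<subseteq> (*) c ` gen_submod D S" using gen_submod_superset by blast
  thus "gen_submod D ((*) c ` S) \<subseteq> (*) c ` gen_submod D S"
    by (rule gen_submod_least[OF submod_image_mult[OF submod_gen_submod]])
qed

lemma submod_ideal_sum:
  assumes A: "submod D A" and B: "submod D B"
  shows "submod D (ideal_sum A B)"
  unfolding submod_def ideal_sum_def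
proof (intro conjI ballI)
  show "0 \<in> {a + b |a b. a \<in> A \<and> b \<in> B}" using A B submod_0 by force
next
  fix x y assume "x \<in> {a + b |a b. a \<in> A \<and> b \<in> B}" "y \<in> {a + b |a b. a \<in> A \<and> b \<in> B}"
  then obtain a b a' b' where "x = a + b" "y = a' + b'" "a \<in> A" "a' \<in> A" "b \<in> B" "b' \<in> B"
    by auto
  moreover have "x + y = (a + a') + (b + b')" using calculation by simp
  ultimately show "x + y \<in> {a + b |a b. a \<in> A \<and> b \<in> B}"
    using submod_add[OF A] submod_add[OF B] by blast
next
  fix d x assume "d \<in> D" "x \<in> {a + b |a b. a \<in> A \<and> b \<in> B}"
  then obtain a b where "x = a + b" "a \<in> A" "b \<in> B" by auto
  moreover have "d * x = d * a + d * b" using calculation by (simp add: algebra_simps)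
  ultimately show "d * x \<in> {a + b |a b. a \<in> A \<and> b \<in> B}"
    using submod_mult[OF A] submod_mult[OF B] \<open>d \<in> D\<close> by blast
qed

lemma ideal_sum_upper1: "submod D B \<Longrightarrow> A \<subseteq> ideal_sum A B"
  unfolding ideal_sum_def using submod_0 by force

lemma ideal_sum_upper2: "submod D A \<Longrightarrow> B \<subseteq> ideal_sum A B"
  unfolding ideal_sum_def using submod_0 by force

lemma ideal_sum_least: "submod D M \<Longrightarrow> A \<subseteq> M \<Longrightarrow> B \<subseteq> M \<Longrightarrow> ideal_sum A B \<subseteq> M"
  unfolding ideal_sum_def using submod_add by blast

lemma ideal_sum_mono: "A \<subseteq> A' \<Longrightarrow> B \<subseteq> B' \<Longrightarrow> ideal_sum A B \<subseteq> ideal_sum A' B'"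
  unfolding ideal_sum_def by blast

lemma ideal_sum_zero: "ideal_sum A {0} = A"
  unfolding ideal_sum_def by auto

lemma gen_submod_insert: "gen_submod D (insert s S) = ideal_sum (princ D s) (gen_submod D S)"
proof
  have "s \<in> ideal_sum (princ D s) (gen_submod D S)"
    using ideal_sum_upper1[OF submod_gen_submod, of "princ D s" S] by blast
  moreover have "S \<subseteq> ideal_sum (princ D s) (gen_submod D S)"
    using ideal_sum_upper2[OF submod_princ, of "gen_submod D S" s] gen_submod_superset[of S]
    by blast
  ultimately show "gen_submod D (insert s S) \<subseteq> ideal_sum (princ D s) (gen_submod D S)"
    using gen_submod_least[OF submod_ideal_sum[OF submod_princ submod_gen_submod]] by blast
  have "princ D s \<subseteq> gen_submod D (insert s S)"
    using princ_least[OF submod_gen_submod] gen_submod_superset[of "insert s S"] by blast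
  moreover have "gen_submod D S \<subseteq> gen_submod D (insert s S)"
    by (rule gen_submod_mono) blast
  ultimately show "ideal_sum (princ D s) (gen_submod D S) \<subseteq> gen_submod D (insert s S)"
    by (rule ideal_sum_least[OF submod_gen_submod])
qed

lemma gen_submod_pair: "gen_submod D {a, b} = ideal_sum (princ D a) (princ D b)"
  using gen_submod_insert[of a "{b}"] gen_submod_singleton by simp

lemma common_denominator:
  "finite S \<Longrightarrow> S \<subseteq> qf D \<Longrightarrow> \<exists>d\<in>D. d \<noteq> 0 \<and> (\<forall>s\<in>S. d * s \<in> D)"
proof (induction S rule: finite_induct)
  case empty
  thus ?case by (intro bexI[of _ 1]) auto
next
  case (insert x S)
  then obtain d where d: "d \<in> D" "d \<noteq> 0" "\<forall>s\<in>S. d * s \<in> D" by auto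
  obtain a b where ab: "a \<in> D" "b \<in> D" "b \<noteq> 0" "x = a / b"
    using insert.prems by (auto elim: qfE)
  have "d * b * x \<in> D" using d ab by (simp add: mult_in)
  moreover have "d * b * s \<in> D" if "s \<in> S" for s
    using d(3) that ab(2) mult_in mult.commute mult.assoc by metis
  ultimately show ?case using d ab by (intro bexI[of _ "d*b"]) auto
qed

lemma nz_frac_gen_submod:
  assumes S: "finite S" "S \<subseteq> qf D" and s: "s \<in> S" "s \<noteq> 0"
  shows "nz_frac D (gen_submod D S)"
proof -
  obtain d where d: "d \<in> D" "d \<noteq> 0" "\<forall>s\<in>S. d * s \<in> D"
    using common_denominator S by blast
  have "submod D {a. d * a \<in> D}" unfolding submod_def
    by (auto simp: distrib_left mult.left_commute[of d])
  hence "gen_submod D S \<subseteq> {a. d * a \<in> D}" using gen_submod_least d(3) by blast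
  hence "frac_ideal D (gen_submod D S)"
    unfolding frac_ideal_def using submod_gen_submod d by blast
  thus ?thesis unfolding nz_frac_def using gen_submod_superset s by blast
qed

lemma nz_frac_pair: "a \<in> qf D \<Longrightarrow> b \<in> qf D \<Longrightarrow> a \<noteq> 0 \<Longrightarrow> nz_frac D (gen_submod D {a, b})"
  using nz_frac_gen_submod[of "{a,b}" a] by auto

lemma nz_frac_ideal_sum:
  assumes A: "nz_frac D A" and B: "nz_frac D B"
  shows "nz_frac D (ideal_sum A B)"
proof -
  obtain d e where d: "d \<in> D" "d \<noteq> 0" "\<forall>a\<in>A. d * a \<in> D"
    and e: "e \<in> D" "e \<noteq> 0" "\<forall>a\<in>B. e * a \<in> D"
    using A B unfolding nz_frac_def frac_ideal_def by blast
  have "\<forall>x\<in>ideal_sum A B. (d * e) * x \<in> D"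
  proof
    fix x assume "x \<in> ideal_sum A B"
    then obtain a b where ab: "a \<in> A" "b \<in> B" "x = a + b" unfolding ideal_sum_def by blast
    have "(d * e) * (a + b) = e * (d * a) + d * (e * b)" by (simp add: algebra_simps)
    moreover have "e * (d * a) + d * (e * b) \<in> D" using d e ab by blast
    ultimately show "(d * e) * x \<in> D" using ab by (simp only:)
  qed
  moreover have "submod D (ideal_sum A B)"
    using A B submod_ideal_sum nz_frac_submod by blast
  ultimately have "frac_ideal D (ideal_sum A B)"
    unfolding frac_ideal_def using d e by (intro conjI bexI[of _ "d*e"]) auto
  moreover have "A \<subseteq> ideal_sum A B" using ideal_sum_upper1 nz_frac_submod[OF B] by blast
  ultimately show ?thesis
    using nz_frac_ex_nonzero[OF A] unfolding nz_frac_def by blast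
qed

lemma ideal_prod_princ: "ideal_prod (princ D a) (princ D b) = princ D (a * b)"
proof
  show "ideal_prod (princ D a) (princ D b) \<subseteq> princ D (a * b)"
  proof
    fix x assume "x \<in> ideal_prod (princ D a) (princ D b)"
    then obtain n A B where h: "\<forall>i<(n::nat). A i \<in> princ D a \<and> B i \<in> princ D b"
      "x = (\<Sum>i<n. A i * B i)"
      unfolding ideal_prod_def by blast
    have "\<forall>i<n. \<exists>d. d \<in> D \<and> A i = a * d" "\<forall>i<n. \<exists>d. d \<in> D \<and> B i = b * d"
      using h(1) unfolding princ_iff by blast+
    then obtain f g where fg: "\<forall>i<n. f i \<in> D \<and> A i = a * f i" "\<forall>i<n. g i \<in> D \<and> B i = b * g i"
      by metis
    have "x = (a * b) * (\<Sum>i<n. f i * g i)"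
      unfolding h(2) sum_distrib_left using fg by (intro sum.cong) (auto simp: algebra_simps)
    moreover have "(\<Sum>i<n. f i * g i) \<in> D" using fg by auto
    ultimately show "x \<in> princ D (a * b)" by auto
  qed
next
  show "princ D (a * b) \<subseteq> ideal_prod (princ D a) (princ D b)"
  proof
    fix x assume "x \<in> princ D (a * b)"
    then obtain d where d: "d \<in> D" "x = a * b * d" unfolding princ_iff by blast
    have "x = (\<Sum>i<(1::nat). (a * d) * b)" using d by (simp add: algebra_simps)
    thus "x \<in> ideal_prod (princ D a) (princ D b)" unfolding ideal_prod_def
      using d by (intro CollectI exI[of _ 1] exI[of _ "\<lambda>_. a * d"] exI[of _ "\<lambda>_. b"]) auto
  qed
qed

lemma ideal_prod_list_princ: "ideal_prod_list D (map (princ D) ys) = princ D (prod_list ys)"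
  unfolding ideal_prod_list_def by (induction ys) (auto simp: ideal_prod_princ)

lemma prime_ideal_subset: "prime_ideal D Q \<Longrightarrow> Q \<subseteq> D"
  unfolding prime_ideal_def by blast

lemma prime_ideal_submod: "prime_ideal D Q \<Longrightarrow> submod D Q"
  unfolding prime_ideal_def by blast

lemma one_notin_prime_ideal: "prime_ideal D Q \<Longrightarrow> 1 \<notin> Q"
  unfolding prime_ideal_def using submod_eq_if_one by blast

lemma zero_in_prime_ideal: "prime_ideal D Q \<Longrightarrow> 0 \<in> Q"
  using prime_ideal_submod submod_0 by blast

lemma prime_idealD: "prime_ideal D Q \<Longrightarrow> a \<in> D \<Longrightarrow> b \<in> D \<Longrightarrow> a * b \<in> Q \<Longrightarrow> a \<in> Q \<or> b \<in> Q"
  unfolding prime_ideal_def by blast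

lemma unit_notin_prime_ideal: "prime_ideal D Q \<Longrightarrow> is_unit_in D u \<Longrightarrow> u \<notin> Q"
  using submod_eq_if_unit prime_ideal_submod prime_ideal_subset unfolding prime_ideal_def by blast

lemma prime_ideal_prod_list:
  "prime_ideal D Q \<Longrightarrow> set xs \<subseteq> D \<Longrightarrow> prod_list xs \<in> Q \<Longrightarrow> \<exists>x\<in>set xs. x \<in> Q"
proof (induction xs)
  case (Cons x xs)
  thus ?case using prime_idealD[of Q x "prod_list xs"] prod_list_in by auto
qed (simp add: one_notin_prime_ideal)

lemma prime_ideal_power: "prime_ideal D Q \<Longrightarrow> z \<in> D \<Longrightarrow> z ^ n \<in> Q \<Longrightarrow> z \<in> Q"
proof (induction n)
  case (Suc n)
  thus ?case using prime_idealD[of Q z "z ^ n"] by auto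
qed (simp add: one_notin_prime_ideal)

lemma prime_ideal_ex_nonzero: "prime_ideal D Q \<Longrightarrow> Q \<noteq> {0} \<Longrightarrow> \<exists>x\<in>Q. x \<noteq> 0 \<and> x \<in> D"
  using zero_in_prime_ideal prime_ideal_subset by blast

lemma loc_iff: "x \<in> loc D P \<longleftrightarrow> (\<exists>a s. a \<in> D \<and> s \<in> D \<and> s \<notin> P \<and> x = a / s)"
  unfolding loc_def by blast

lemma loc_memI: "a \<in> D \<Longrightarrow> s \<in> D \<Longrightarrow> s \<notin> P \<Longrightarrow> a / s \<in> loc D P"
  unfolding loc_def by blast

lemma in_loc: "prime_ideal D P \<Longrightarrow> a \<in> D \<Longrightarrow> a \<in> loc D P"
  using loc_memI[of a 1 P] one_notin_prime_ideal by simp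

lemma loc_mult: "prime_ideal D P \<Longrightarrow> x \<in> loc D P \<Longrightarrow> y \<in> loc D P \<Longrightarrow> x * y \<in> loc D P"
proof -
  assume P: "prime_ideal D P" and "x \<in> loc D P" "y \<in> loc D P"
  then obtain a s b t where h: "a \<in> D" "s \<in> D" "s \<notin> P" "x = a / s"
    "b \<in> D" "t \<in> D" "t \<notin> P" "y = b / t"
    unfolding loc_iff by blast
  have "x * y = (a * b) / (s * t)" using h by simp
  moreover have "s * t \<notin> P" using prime_idealD[OF P] h by blast
  ultimately show ?thesis using loc_memI h by (simp add: mult_in add_in)
qed

lemma loc_add: "prime_ideal D P \<Longrightarrow> x \<in> loc D P \<Longrightarrow> y \<in> loc D P \<Longrightarrow> x + y \<in> loc D P"
proof -
  assume P: "prime_ideal D P" and "x \<in> loc D P" "y \<in> loc D P"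
  then obtain a s b t where h: "a \<in> D" "s \<in> D" "s \<notin> P" "x = a / s"
    "b \<in> D" "t \<in> D" "t \<notin> P" "y = b / t"
    unfolding loc_iff by blast
  have "s \<noteq> 0" "t \<noteq> 0" using h zero_in_prime_ideal[OF P] by auto
  hence "x + y = (a * t + b * s) / (s * t)" using h by (simp add: field_simps)
  moreover have "s * t \<notin> P" using prime_idealD[OF P] h by blast
  ultimately show ?thesis using loc_memI h by (simp add: mult_in add_in)
qed

lemma loc_power: "prime_ideal D P \<Longrightarrow> v \<in> loc D P \<Longrightarrow> v ^ n \<in> loc D P"
  by (induction n) (auto intro: loc_mult in_loc)

lemma subring_loc: "prime_ideal D P \<Longrightarrow> subring (loc D P)"
  unfolding subring_def
  using in_loc loc_add loc_mult loc_mult[of P "-1"] in_loc[of P "-1"]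
  by (metis diff_conv_add_uminus mult_minus1 one_in uminus_in zero_in)

lemma qf_loc_subset: "prime_ideal D P \<Longrightarrow> qf (loc D P) \<subseteq> qf D"
proof
  fix x assume "x \<in> qf (loc D P)"
  then obtain u v where "u \<in> loc D P" "v \<in> loc D P" "x = u / v" unfolding qf_def by blast
  moreover have "w \<in> loc D P \<Longrightarrow> w \<in> qf D" for w
    unfolding loc_iff using qfI by (metis divide_eq_0_iff qf_zero)
  ultimately show "x \<in> qf D" using qf_divide by blast
qed

lemma qf_subset_qf_loc: "prime_ideal D P \<Longrightarrow> x \<in> qf D \<Longrightarrow> x \<in> qf (loc D P)"
  by (elim qfE) (use in_loc in \<open>auto simp: qf_def\<close>)

definition coprime_in :: "'k \<Rightarrow> 'k \<Rightarrow> bool" where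
  "coprime_in a b \<longleftrightarrow> (\<forall>e\<in>D. dvd_in D e a \<longrightarrow> dvd_in D e b \<longrightarrow> is_unit_in D e)"

lemma coprime_in_commute: "coprime_in a b \<Longrightarrow> coprime_in b a"
  unfolding coprime_in_def by blast

lemma gcd_domain_coprime_factors:
  assumes G: "gcd_domain D" and ab: "a \<in> D" "b \<in> D" "a \<noteq> 0" "b \<noteq> 0"
  shows "\<exists>g a' b'. g \<in> D \<and> a' \<in> D \<and> b' \<in> D \<and> g \<noteq> 0 \<and> a = g * a' \<and> b = g * b' \<and>
    coprime_in a' b'"
proof -
  obtain g where g: "g \<in> D" "dvd_in D g a" "dvd_in D g b"
    "\<forall>e\<in>D. dvd_in D e a \<longrightarrow> dvd_in D e b \<longrightarrow> dvd_in D e g"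
    using G ab unfolding gcd_domain_def by blast
  obtain a' b' where a': "a' \<in> D" "a = g * a'" and b': "b' \<in> D" "b = g * b'"
    using g unfolding dvd_in_def by blast
  have g0: "g \<noteq> 0" using a' ab by auto
  have "coprime_in a' b'" unfolding coprime_in_def
  proof (intro ballI impI)
    fix e assume e: "e \<in> D" "dvd_in D e a'" "dvd_in D e b'"
    have "dvd_in D (g * e) a" "dvd_in D (g * e) b"
      using dvd_in_mult_mono[OF e(2) g(1)] dvd_in_mult_mono[OF e(3) g(1)] a' b' by auto
    hence "dvd_in D (g * e) (g * 1)" using g(4) mult_in[OF g(1) e(1)] by simp
    thus "is_unit_in D e" using dvd_in_cancel g0 dvd_in_one_imp_unit e by blast
  qed
  thus ?thesis using g a' b' g0 by blast
qed

lemma gcd_domain_qf_coprime: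
  assumes G: "gcd_domain D" and x: "x \<in> qf D" "x \<noteq> 0"
  obtains a b where "a \<in> D" "b \<in> D" "a \<noteq> 0" "b \<noteq> 0" "coprime_in a b" "x = a / b"
proof -
  obtain a b where ab: "a \<in> D" "b \<in> D" "b \<noteq> 0" "x = a / b" using x(1) by (rule qfE)
  have a0: "a \<noteq> 0" using ab x by auto
  obtain g a' b' where r: "g \<in> D" "a' \<in> D" "b' \<in> D" "g \<noteq> 0" "a = g * a'" "b = g * b'"
    "coprime_in a' b'"
    using gcd_domain_coprime_factors[OF G ab(1,2) a0 ab(3)] by blast
  have "a' \<noteq> 0" "b' \<noteq> 0" "x = a' / b'" using r a0 ab by auto
  thus ?thesis using that r by blast
qed

lemma gcd_domain_coprime_dvd_in_mult:
  assumes G: "gcd_domain D" and ab: "a \<in> D" "b \<in> D" "a \<noteq> 0" "b \<noteq> 0" "coprime_in a b"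
    and s: "s \<in> D" and d: "dvd_in D b (s * a)"
  shows "dvd_in D b s"
proof (cases "s = 0")
  case True
  thus ?thesis using dvd_in_zero by simp
next
  case False
  obtain g where g: "g \<in> D" "dvd_in D g (s * a)" "dvd_in D g (s * b)"
    "\<forall>e\<in>D. dvd_in D e (s * a) \<longrightarrow> dvd_in D e (s * b) \<longrightarrow> dvd_in D e g"
    using G ab s False mult_in unfolding gcd_domain_def by (metis no_zero_divisors)
  have "dvd_in D s (s * a)" "dvd_in D s (s * b)" using ab s unfolding dvd_in_def by auto
  then obtain k where k: "k \<in> D" "g = s * k" using g(4) s unfolding dvd_in_def by blast
  have "dvd_in D k a" "dvd_in D k b" using dvd_in_cancel[OF False] g(2,3) k by simp_all
  hence "is_unit_in D k" using ab(5) k(1) unfolding coprime_in_def by blast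
  then obtain k' where k': "k' \<in> D" "k * k' = 1" unfolding is_unit_in_def by blast
  have "dvd_in D b (s * b)" using s ab dvd_in_refl dvd_in_mult_left by blast
  then obtain c where c: "c \<in> D" "s * k = b * c" using g(4) d ab k unfolding dvd_in_def by metis
  have "s = b * (c * k')"
    by (metis c(2) k'(2) mult.assoc mult.right_neutral)
  thus ?thesis using c k' unfolding dvd_in_def by blast
qed

definition has_lcms :: "'k \<Rightarrow> bool" where
  "has_lcms a \<longleftrightarrow> (\<forall>b\<in>D. b \<noteq> 0 \<longrightarrow> (\<exists>m. princ D a \<inter> princ D b = princ D m))"

lemma unit_has_lcms: "is_unit_in D u \<Longrightarrow> has_lcms u"
  unfolding has_lcms_def using princ_unit princ_subset by (metis inf.absorb2)

text \<open>If aD \<inter> cD = akD and bD \<inter> kD = nD, then abD \<inter> cD = anD.\<close>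

lemma has_lcms_mult:
  assumes a: "a \<in> D" "a \<noteq> 0" "has_lcms a" and b: "b \<in> D" "has_lcms b"
  shows "has_lcms (a * b)"
  unfolding has_lcms_def
proof (intro ballI impI)
  fix c assume c: "c \<in> D" "c \<noteq> 0"
  obtain m where m: "princ D a \<inter> princ D c = princ D m" using a c unfolding has_lcms_def by blast
  have "a * c \<in> princ D a" "c * a \<in> princ D c" using princ_memI a(1) c(1) by blast+
  hence "a * c \<in> princ D m" using m by (auto simp: mult.commute)
  hence m0: "m \<noteq> 0" using a c by auto
  obtain k where k: "k \<in> D" "m = a * k" using m princ_self princ_iff by blast
  have k0: "k \<noteq> 0" using k m0 by auto
  obtain n where n: "princ D b \<inter> princ D k = princ D n" using b k k0 unfolding has_lcms_def by blast
  have "princ D (a * b) \<inter> princ D c = princ D (a * n)"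
  proof
    show "princ D (a * b) \<inter> princ D c \<subseteq> princ D (a * n)"
    proof
      fix z assume z: "z \<in> princ D (a * b) \<inter> princ D c"
      obtain v where v: "v \<in> D" "z = a * (b * v)" using z princ_iff by (auto simp: mult.assoc)
      hence "z \<in> princ D a" using b(1) by blast
      hence "z \<in> princ D m" using z m by blast
      then obtain w where w: "w \<in> D" "z = a * (k * w)" using k princ_iff by (auto simp: mult.assoc)
      have e: "k * w = b * v" using v w a(2) by simp
      hence "k * w \<in> princ D b \<inter> princ D k" using v(1) w(1) by (metis IntI princ_memI)
      then obtain r where r: "r \<in> D" "k * w = n * r" using n princ_iff by blast
      have "z = a * n * r" using w r by (simp add: mult.assoc)
      thus "z \<in> princ D (a * n)" using r(1) by blast
    qed
  next
    obtain q where q: "q \<in> D" "n = b * q" using n princ_self princ_iff by blast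
    obtain q' where q': "q' \<in> D" "n = k * q'" using n princ_self princ_iff by blast
    have "a * n \<in> princ D (a * b)" using princ_memI[OF q(1), of "a * b"] q by (simp add: mult.assoc)
    moreover have "m * q' \<in> princ D c"
      using m princ_self submod_mult_right[OF submod_princ q'(1)] by blast
    hence "a * n \<in> princ D c" using q' k by (simp add: mult.assoc)
    ultimately show "princ D (a * n) \<subseteq> princ D (a * b) \<inter> princ D c"
      using princ_least[OF submod_princ] by (metis Int_greatest)
  qed
  thus "\<exists>m. princ D (a * b) \<inter> princ D c = princ D m" by blast
qed

text \<open>The generator of aD \<inter> bD is an lcm m of a and b, and ab/m is then a gcd.\<close>

lemma gcd_domain_if_has_lcms:
  assumes lcms: "\<And>a. a \<in> D \<Longrightarrow> a \<noteq> 0 \<Longrightarrow> has_lcms a"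
  shows "gcd_domain D"
  unfolding gcd_domain_def
proof (intro conjI subring ballI impI)
  fix a b assume ab: "a \<in> D" "b \<in> D" "a \<noteq> 0" "b \<noteq> 0"
  obtain m where m: "princ D a \<inter> princ D b = princ D m"
    using lcms[OF ab(1,3)] ab unfolding has_lcms_def by blast
  have "a * b \<in> princ D a" "b * a \<in> princ D b" using princ_memI ab by blast+
  hence "a * b \<in> princ D m" using m by (auto simp: mult.commute)
  then obtain g where g: "g \<in> D" "a * b = m * g" using princ_iff by blast
  have m0: "m \<noteq> 0" using g ab by auto
  obtain a2 where a2: "a2 \<in> D" "m = b * a2" using m princ_self princ_iff by blast
  obtain b2 where b2: "b2 \<in> D" "m = a * b2" using m princ_self princ_iff by blast
  have "b * a = b * (g * a2)" using g a2 by (simp add: mult.commute mult.left_commute)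
  hence "dvd_in D g a" unfolding dvd_in_def using a2 ab by auto
  have "a * b = a * (g * b2)" using g b2 by (simp add: mult.commute mult.left_commute)
  hence "dvd_in D g b" unfolding dvd_in_def using b2 ab by auto
  moreover have "dvd_in D e g" if e: "e \<in> D" "dvd_in D e a" "dvd_in D e b" for e
  proof -
    obtain a1 where a1: "a1 \<in> D" "a = e * a1" using e unfolding dvd_in_def by blast
    obtain b1 where b1: "b1 \<in> D" "b = e * b1" using e unfolding dvd_in_def by blast
    have "a * b1 \<in> princ D a" "b * a1 \<in> princ D b" using a1 b1 by blast+
    moreover have "a * b1 = e * a1 * b1" "b * a1 = e * a1 * b1" using a1 b1 by (simp_all add: ac_simps)
    ultimately have "e * a1 * b1 \<in> princ D m" using m by auto
    then obtain k where k: "k \<in> D" "e * a1 * b1 = m * k" using princ_iff by blast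
    have "m * g = m * (e * k)" using g a1 b1 k by (metis mult.assoc mult.left_commute)
    thus "dvd_in D e g" using m0 k unfolding dvd_in_def by auto
  qed
  ultimately show "\<exists>d\<in>D. dvd_in D d a \<and> dvd_in D d b \<and>
      (\<forall>e\<in>D. dvd_in D e a \<longrightarrow> dvd_in D e b \<longrightarrow> dvd_in D e d)"
    using g(1) \<open>dvd_in D g a\<close> by blast
qed

end

section \<open>Star operations of finite character\<close>

locale star_domain = subring_domain +
  fixes st :: "'a::field set \<Rightarrow> 'a set"
  assumes star_op: "star_op D st" and finite_character: "finite_character D st"
begin

lemma nz_frac_star: "nz_frac D I \<Longrightarrow> nz_frac D (st I)"
  and star_princ: "x \<in> qf D \<Longrightarrow> x \<noteq> 0 \<Longrightarrow> st (princ D x) = princ D x"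
  and star_image_mult: "x \<in> qf D \<Longrightarrow> x \<noteq> 0 \<Longrightarrow> nz_frac D I \<Longrightarrow> st ((*) x ` I) = (*) x ` st I"
  and star_extensive: "nz_frac D I \<Longrightarrow> I \<subseteq> st I"
  and star_mono: "nz_frac D I \<Longrightarrow> nz_frac D J \<Longrightarrow> I \<subseteq> J \<Longrightarrow> st I \<subseteq> st J"
  and star_idem: "nz_frac D I \<Longrightarrow> st (st I) = st I"
  using star_op unfolding star_op_def by simp_all

lemma star_finite_character:
  "nz_frac D I \<Longrightarrow> st I = \<Union>{st J | J. J \<subseteq> I \<and> nz_frac D J \<and> fin_gen D J}"
  using finite_character unfolding finite_character_def by blast

lemma submod_star: "nz_frac D I \<Longrightarrow> submod D (st I)"
  using nz_frac_star nz_frac_submod by blast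

lemma star_ideal_star: "nz_frac D I \<Longrightarrow> star_ideal D st (st I)"
  unfolding star_ideal_def using nz_frac_star star_idem by blast

lemma star_ideal_princ: "x \<in> qf D \<Longrightarrow> x \<noteq> 0 \<Longrightarrow> star_ideal D st (princ D x)"
  unfolding star_ideal_def using nz_frac_princ star_princ by blast

lemma star_subset_princ:
  "nz_frac D I \<Longrightarrow> x \<in> qf D \<Longrightarrow> x \<noteq> 0 \<Longrightarrow> I \<subseteq> princ D x \<Longrightarrow> st I \<subseteq> princ D x"
  using star_mono[of I "princ D x"] nz_frac_princ[of x] star_princ[of x] by simp

lemma star_integral: "nz_frac D I \<Longrightarrow> I \<subseteq> D \<Longrightarrow> st I \<subseteq> D"
  using star_subset_princ[of I 1] in_qf[OF one_in] by simp

lemma star_eq_if_one: "nz_frac D I \<Longrightarrow> I \<subseteq> D \<Longrightarrow> 1 \<in> st I \<Longrightarrow> st I = D"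
  using submod_eq_if_one submod_star star_integral by blast

lemma proper_int_star_star: "nz_frac D I \<Longrightarrow> I \<subseteq> D \<Longrightarrow> st I \<noteq> D \<Longrightarrow> proper_int_star D st (st I)"
  unfolding proper_int_star_def using star_ideal_star star_integral by blast

lemma star_ideal_sum_star:
  assumes A: "nz_frac D A" and B: "nz_frac D B"
  shows "st (ideal_sum A B) = st (ideal_sum A (st B))"
proof
  have nz1: "nz_frac D (ideal_sum A B)" and nz2: "nz_frac D (ideal_sum A (st B))"
    using nz_frac_ideal_sum A B nz_frac_star by blast+
  show "st (ideal_sum A B) \<subseteq> st (ideal_sum A (st B))"
    using star_mono[OF nz1 nz2] ideal_sum_mono star_extensive[OF B] by blast
  have "A \<subseteq> st (ideal_sum A B)"
    using ideal_sum_upper1 star_extensive[OF nz1] nz_frac_submod[OF B] by blast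
  moreover have "st B \<subseteq> st (ideal_sum A B)"
    using star_mono[OF B nz1] ideal_sum_upper2 nz_frac_submod[OF A] by blast
  ultimately have "ideal_sum A (st B) \<subseteq> st (ideal_sum A B)"
    using ideal_sum_least submod_star[OF nz1] by blast
  thus "st (ideal_sum A (st B)) \<subseteq> st (ideal_sum A B)"
    using star_mono[OF nz2 nz_frac_star[OF nz1]] star_idem[OF nz1] by simp
qed

lemma finite_type_princ: "x \<in> qf D \<Longrightarrow> x \<noteq> 0 \<Longrightarrow> finite_type D st (princ D x)"
  unfolding finite_type_def fin_gen_def
proof (intro exI conjI)
  assume "x \<in> qf D" "x \<noteq> 0"
  thus "nz_frac D (princ D x)" "princ D x = st (princ D x)"
    using nz_frac_princ star_princ by auto
  show "princ D x = gen_submod D {x}" "finite {x}" using gen_submod_singleton by auto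
qed

lemma finite_type_star_gen_submod:
  "finite S \<Longrightarrow> nz_frac D (gen_submod D S) \<Longrightarrow> finite_type D st (st (gen_submod D S))"
  unfolding finite_type_def fin_gen_def by blast

lemma proper_int_star_submod: "proper_int_star D st I \<Longrightarrow> submod D I"
  unfolding proper_int_star_def star_ideal_def using nz_frac_submod by blast

lemma one_notin_proper_int_star: "proper_int_star D st I \<Longrightarrow> 1 \<notin> I"
  using proper_int_star_submod submod_eq_if_one unfolding proper_int_star_def by blast

lemma proper_int_star_Union_chain:
  assumes C: "C \<noteq> {}" "subset.chain {J. proper_int_star D st J} C"
  shows "proper_int_star D st (\<Union>C)"
proof -
  have CA: "\<And>X. X \<in> C \<Longrightarrow> proper_int_star D st X"
    and ch: "\<And>X Y. X \<in> C \<Longrightarrow> Y \<in> C \<Longrightarrow> X \<subseteq> Y \<or> Y \<subseteq> X"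
    using C(2) unfolding subset_chain_def by blast+
  have sm: "\<And>X. X \<in> C \<Longrightarrow> submod D X" using CA proper_int_star_submod by blast
  obtain X0 where X0: "X0 \<in> C" using C by blast
  have "submod D (\<Union>C)" using submod_Union_chain C(1) sm ch by blast
  moreover have "\<Union>C \<subseteq> D" using CA unfolding proper_int_star_def by blast
  moreover obtain z where "z \<in> X0" "z \<noteq> 0"
    using CA[OF X0] nz_frac_ex_nonzero unfolding proper_int_star_def star_ideal_def by blast
  hence "\<Union>C \<noteq> {0}" using X0 by blast
  ultimately have nzU: "nz_frac D (\<Union>C)" using nz_frac_integral by blast
  have "st (\<Union>C) \<subseteq> \<Union>C"
  proof
    fix y assume "y \<in> st (\<Union>C)"
    then obtain J where J: "y \<in> st J" "J \<subseteq> \<Union>C" "nz_frac D J" "fin_gen D J"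
      using star_finite_character[OF nzU] by blast
    then obtain S where S: "finite S" "J = gen_submod D S" unfolding fin_gen_def by blast
    hence "S \<subseteq> \<Union>C" using J(2) gen_submod_superset by blast
    then obtain X where X: "X \<in> C" "S \<subseteq> X"
      using finite_subset_Union_chain[OF S(1) _ C] by blast
    have "J \<subseteq> X" using S X gen_submod_least sm by blast
    hence "st J \<subseteq> X"
      using star_mono[OF J(3)] CA[OF X(1)] unfolding proper_int_star_def star_ideal_def by blast
    thus "y \<in> \<Union>C" using J X by blast
  qed
  hence "st (\<Union>C) = \<Union>C" using star_extensive[OF nzU] by blast
  moreover have "1 \<notin> \<Union>C" using CA one_notin_proper_int_star by blast
  ultimately show ?thesis
    unfolding proper_int_star_def star_ideal_def using nzU \<open>\<Union>C \<subseteq> D\<close> one_in by blast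
qed

lemma ex_max_star_superset:
  assumes "proper_int_star D st I"
  obtains P where "max_star D st P" "I \<subseteq> P"
proof -
  let ?A = "{J. proper_int_star D st J \<and> I \<subseteq> J}"
  have "\<exists>M\<in>?A. \<forall>X\<in>?A. M \<subseteq> X \<longrightarrow> X = M"
  proof (rule subset_Zorn_nonempty)
    fix C assume C: "C \<noteq> {}" "subset.chain ?A C"
    hence "subset.chain {J. proper_int_star D st J} C" unfolding subset_chain_def by blast
    hence "proper_int_star D st (\<Union>C)" using proper_int_star_Union_chain C(1) by blast
    moreover have "I \<subseteq> \<Union>C" using C unfolding subset_chain_def by blast
    ultimately show "\<Union>C \<in> ?A" by blast
  qed (use assms in blast)
  then obtain M where M: "proper_int_star D st M" "I \<subseteq> M" "\<forall>X\<in>?A. M \<subseteq> X \<longrightarrow> X = M"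
    by blast
  hence "max_star D st M" unfolding max_star_def by blast
  thus ?thesis using that M(2) by blast
qed

lemma max_star_proper: "max_star D st P \<Longrightarrow> proper_int_star D st P"
  unfolding max_star_def by blast

lemma max_star_subset: "max_star D st P \<Longrightarrow> P \<subseteq> D"
  unfolding max_star_def proper_int_star_def by blast

lemma max_star_submod: "max_star D st P \<Longrightarrow> submod D P"
  using max_star_proper proper_int_star_submod by blast

lemma max_star_nz_frac: "max_star D st P \<Longrightarrow> nz_frac D P"
  unfolding max_star_def proper_int_star_def star_ideal_def by blast

lemma max_star_star: "max_star D st P \<Longrightarrow> st P = P"
  unfolding max_star_def proper_int_star_def star_ideal_def by blast

lemma one_notin_max_star: "max_star D st P \<Longrightarrow> 1 \<notin> P"
  using max_star_proper one_notin_proper_int_star by blast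

lemma zero_in_max_star: "max_star D st P \<Longrightarrow> 0 \<in> P"
  using max_star_submod submod_0 by blast

lemma max_star_not_unit: "max_star D st P \<Longrightarrow> x \<in> P \<Longrightarrow> \<not> is_unit_in D x"
  using submod_eq_if_unit max_star_submod max_star_subset one_notin_max_star by (metis one_in)

lemma max_star_antisym: "max_star D st P \<Longrightarrow> max_star D st Q \<Longrightarrow> P \<subseteq> Q \<Longrightarrow> P = Q"
  unfolding max_star_def by blast

lemma star_subset_max_star:
  "max_star D st P \<Longrightarrow> nz_frac D I \<Longrightarrow> I \<subseteq> P \<Longrightarrow> st I \<subseteq> P"
  using star_mono max_star_nz_frac max_star_star by metis

lemma ex_max_star_of_nonunit:
  assumes "x \<in> D" "x \<noteq> 0" "\<not> is_unit_in D x"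
  obtains P where "max_star D st P" "x \<in> P"
proof -
  have "princ D x \<noteq> D"
  proof
    assume "princ D x = D"
    then obtain d where "d \<in> D" "1 = x * d" using princ_iff one_in by metis
    thus False using assms unfolding is_unit_in_def by metis
  qed
  hence "proper_int_star D st (princ D x)"
    unfolding proper_int_star_def using star_ideal_princ in_qf princ_subset assms by blast
  thus ?thesis using that ex_max_star_superset princ_self by blast
qed

lemma ex_max_star_of_star_pair:
  assumes ab: "a \<in> D" "b \<in> D" "a \<noteq> 0" and ne: "st (gen_submod D {a, b}) \<noteq> D"
  obtains P where "max_star D st P" "a \<in> P" "b \<in> P"
proof -
  have nz: "nz_frac D (gen_submod D {a, b})" using nz_frac_pair in_qf ab by blast
  have "{a, b} \<subseteq> D" using ab by blast
  hence "gen_submod D {a, b} \<subseteq> D" using gen_submod_least[OF submod_self] by blast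
  hence "proper_int_star D st (st (gen_submod D {a, b}))" using proper_int_star_star[OF nz _ ne] by blast
  then obtain P where P: "max_star D st P" "st (gen_submod D {a, b}) \<subseteq> P"
    by (rule ex_max_star_superset)
  have "{a, b} \<subseteq> st (gen_submod D {a, b})"
    using gen_submod_superset[of "{a,b}"] star_extensive[OF nz] by blast
  hence "a \<in> P" "b \<in> P" using P(2) by auto
  thus ?thesis using that P(1) by blast
qed

lemma star_pair_subset_max_star:
  assumes P: "max_star D st P" and ab: "a \<in> P" "b \<in> P" "a \<noteq> 0"
  shows "st (gen_submod D {a, b}) \<subseteq> P"
proof -
  have "a \<in> D" "b \<in> D" using ab max_star_subset[OF P] by auto
  hence "nz_frac D (gen_submod D {a, b})" using nz_frac_pair in_qf ab(3) by blast
  moreover have "{a, b} \<subseteq> P" using ab by blast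
  hence "gen_submod D {a, b} \<subseteq> P" using gen_submod_least[OF max_star_submod[OF P]] by blast
  ultimately show ?thesis by (rule star_subset_max_star[OF P])
qed

lemma star_eq_if_not_subset_max_star:
  assumes P: "max_star D st P" and I: "nz_frac D I" "I \<subseteq> D" "P \<subseteq> I" "\<not> I \<subseteq> P"
  shows "st I = D"
proof (rule ccontr)
  assume "st I \<noteq> D"
  hence "proper_int_star D st (st I)" using proper_int_star_star[OF I(1,2)] by blast
  moreover have "P \<subseteq> st I" using I(3) star_extensive[OF I(1)] by blast
  ultimately have "st I = P" using P unfolding max_star_def by blast
  thus False using I(4) star_extensive[OF I(1)] by blast
qed

text \<open>For a, b outside P the star of P + aD is D, and multiplying it by b lands in P.\<close>

lemma prime_ideal_max_star:
  assumes P: "max_star D st P"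
  shows "prime_ideal D P"
  unfolding prime_ideal_def
proof (intro conjI ballI impI)
  fix a b assume ab: "a \<in> D" "b \<in> D" "a * b \<in> P"
  show "a \<in> P \<or> b \<in> P"
  proof (rule ccontr)
    assume "\<not> (a \<in> P \<or> b \<in> P)"
    hence na: "a \<notin> P" and nb: "b \<notin> P" by auto
    have b0: "b \<noteq> 0" using nb zero_in_max_star[OF P] by auto
    let ?S = "ideal_sum P (princ D a)"
    have "a \<noteq> 0" using na zero_in_max_star[OF P] by auto
    hence nzS: "nz_frac D ?S"
      using nz_frac_ideal_sum[OF max_star_nz_frac[OF P] nz_frac_princ[OF in_qf[OF ab(1)]]] by blast
    have SD: "?S \<subseteq> D"
      using ideal_sum_least[OF submod_self] max_star_subset[OF P] princ_subset[OF ab(1)] by blast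
    have "a \<in> ?S" using ideal_sum_upper2[OF max_star_submod[OF P]] princ_self by blast
    hence "st ?S = D"
      using star_eq_if_not_subset_max_star[OF P nzS SD] ideal_sum_upper1[OF submod_princ] na by blast
    have "(*) b ` ?S \<subseteq> P"
    proof
      fix y assume "y \<in> (*) b ` ?S"
      then obtain p d where pd: "p \<in> P" "d \<in> D" "y = b * (p + a * d)"
        unfolding ideal_sum_def princ_iff by blast
      have "y = b * p + d * (a * b)" using pd by (simp add: algebra_simps)
      moreover have "b * p \<in> P" "d * (a * b) \<in> P"
        using submod_mult[OF max_star_submod[OF P]] pd ab by blast+
      ultimately show "y \<in> P" using submod_add[OF max_star_submod[OF P]] by simp
    qed
    hence "st ((*) b ` ?S) \<subseteq> P"
      using star_subset_max_star[OF P nz_frac_image_mult[OF in_qf[OF ab(2)] b0 nzS]] by blast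
    moreover have "st ((*) b ` ?S) = (*) b ` D"
      using star_image_mult[OF in_qf[OF ab(2)] b0 nzS] \<open>st ?S = D\<close> by simp
    ultimately show False using nb by force
  qed
qed (use max_star_submod max_star_subset one_notin_max_star assms in blast)+

lemma star_homog_enlarge:
  assumes H: "star_homog D st I" and R: "max_star D st R" "I \<subseteq> R"
    and F: "finite F" "F \<subseteq> R"
  obtains A where "proper_int_star D st A" "finite_type D st A" "I \<subseteq> A" "F \<subseteq> A"
proof -
  obtain G where G: "nz_frac D G" "fin_gen D G" "I = st G"
    using H unfolding star_homog_def finite_type_def by blast
  then obtain T where T: "finite T" "G = gen_submod D T" unfolding fin_gen_def by blast
  have "T \<subseteq> I" using T G gen_submod_superset star_extensive by blast
  let ?G = "gen_submod D (T \<union> F)"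
  have "T \<union> F \<subseteq> R" using R F \<open>T \<subseteq> I\<close> by blast
  hence GR: "?G \<subseteq> R" using gen_submod_least[OF max_star_submod[OF R(1)]] by blast
  have GG: "G \<subseteq> ?G" using T gen_submod_mono by blast
  obtain g where "g \<in> G" "g \<noteq> 0" using nz_frac_ex_nonzero[OF G(1)] by blast
  hence "?G \<noteq> {0}" using GG by blast
  hence nzG: "nz_frac D ?G"
    using nz_frac_integral[OF submod_gen_submod] GR max_star_subset[OF R(1)] by blast
  have sGR: "st ?G \<subseteq> R" using star_subset_max_star[OF R(1) nzG GR] .
  hence "st ?G \<noteq> D" using one_notin_max_star[OF R(1)] one_in by blast
  show ?thesis
  proof
    show "proper_int_star D st (st ?G)"
      using proper_int_star_star[OF nzG] GR max_star_subset[OF R(1)] \<open>st ?G \<noteq> D\<close> by blast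
    show "finite_type D st (st ?G)" using finite_type_star_gen_submod T F nzG by blast
    show "I \<subseteq> st ?G" using G(3) star_mono[OF G(1) nzG GG] by blast
    show "F \<subseteq> st ?G" using gen_submod_superset[of "T \<union> F"] star_extensive[OF nzG] by blast
  qed
qed

text \<open>If a star-homogeneous ideal lay in two maximal star ideals P and Q, then finitely many
  elements of P and Q would already witness st (P + Q) = D; enlarging I by them inside P and
  inside Q contradicts homogeneity.\<close>

lemma star_homog_unique_max:
  assumes H: "star_homog D st I" and P: "max_star D st P" and Q: "max_star D st Q"
    and IP: "I \<subseteq> P" and IQ: "I \<subseteq> Q"
  shows "P = Q"
proof (rule ccontr)
  assume PQ: "P \<noteq> Q"
  let ?W = "ideal_sum P Q"
  have nzW: "nz_frac D ?W" using nz_frac_ideal_sum max_star_nz_frac P Q by blast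
  have WD: "?W \<subseteq> D" using ideal_sum_least[OF submod_self] max_star_subset P Q by blast
  have "\<not> ?W \<subseteq> P"
    using ideal_sum_upper2[OF max_star_submod[OF P]] max_star_antisym[OF Q P] PQ by blast
  hence "st ?W = D"
    using star_eq_if_not_subset_max_star[OF P nzW WD] ideal_sum_upper1[OF max_star_submod[OF Q]]
    by blast
  hence "1 \<in> st ?W" by simp
  then obtain J where J: "1 \<in> st J" "J \<subseteq> ?W" "nz_frac D J" "fin_gen D J"
    using star_finite_character[OF nzW] by blast
  then obtain S where S: "finite S" "J = gen_submod D S" unfolding fin_gen_def by blast
  have "\<forall>s\<in>S. \<exists>p q. p \<in> P \<and> q \<in> Q \<and> s = p + q"
    using J(2) S gen_submod_superset unfolding ideal_sum_def by blast
  then obtain fp fq where f: "\<forall>s\<in>S. fp s \<in> P \<and> fq s \<in> Q \<and> s = fp s + fq s" by metis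
  have "fp ` S \<subseteq> P" "fq ` S \<subseteq> Q" using f by auto
  obtain A where A: "proper_int_star D st A" "finite_type D st A" "I \<subseteq> A" "fp ` S \<subseteq> A"
    using star_homog_enlarge[OF H P IP finite_imageI[OF S(1)] \<open>fp ` S \<subseteq> P\<close>] .
  obtain B where B: "proper_int_star D st B" "finite_type D st B" "I \<subseteq> B" "fq ` S \<subseteq> B"
    using star_homog_enlarge[OF H Q IQ finite_imageI[OF S(1)] \<open>fq ` S \<subseteq> Q\<close>] .
  have smAB: "submod D (ideal_sum A B)"
    using submod_ideal_sum proper_int_star_submod A(1) B(1) by blast
  have "S \<subseteq> ideal_sum A B" using f A(4) B(4) unfolding ideal_sum_def by blast
  hence JS: "J \<subseteq> ideal_sum A B" using S gen_submod_least[OF smAB] by blast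
  have ABD: "ideal_sum A B \<subseteq> D"
    using ideal_sum_least[OF submod_self] A(1) B(1) unfolding proper_int_star_def by blast
  have nzAB: "nz_frac D (ideal_sum A B)"
    using nz_frac_ideal_sum A(1) B(1) unfolding proper_int_star_def star_ideal_def by blast
  have "st (ideal_sum A B) = D"
    using star_eq_if_one[OF nzAB ABD] star_mono[OF J(3) nzAB JS] J(1) by blast
  thus False using H A B unfolding star_homog_def by blast
qed

lemma M_of_eq: "star_homog D st I \<Longrightarrow> max_star D st P \<Longrightarrow> I \<subseteq> P \<Longrightarrow> M_of D st I = P"
  unfolding M_of_def using star_homog_unique_max by (intro the_equality) auto

lemma star_comaximal_dvd_in_mult:
  assumes ab: "a \<in> D" "b \<in> D" "a \<noteq> 0" and comax: "st (gen_submod D {a, b}) = D"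
    and c: "c \<in> D" and d: "dvd_in D a (b * c)"
  shows "dvd_in D a c"
proof (cases "c = 0")
  case True
  thus ?thesis using dvd_in_zero by simp
next
  case False
  have nz: "nz_frac D (gen_submod D {a, b})" using nz_frac_pair in_qf ab by blast
  have "{c * a, c * b} \<subseteq> princ D a"
    using princ_memI[OF c, of a] d princ_iff_dvd_in[of "b*c" a] by (auto simp: mult.commute)
  hence "(*) c ` gen_submod D {a, b} \<subseteq> princ D a"
    unfolding image_mult_gen_submod using gen_submod_least[OF submod_princ] by simp
  hence "st ((*) c ` gen_submod D {a, b}) \<subseteq> princ D a"
    using star_subset_princ nz_frac_image_mult[OF in_qf[OF c] False nz] in_qf[OF ab(1)] ab(3)
    by blast
  moreover have "st ((*) c ` gen_submod D {a, b}) = (*) c ` D"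
    using star_image_mult[OF in_qf[OF c] False nz] comax by simp
  ultimately have "c * 1 \<in> princ D a" by blast
  thus ?thesis unfolding princ_iff_dvd_in by simp
qed

lemma star_pair_princ_cofactors:
  assumes ab: "a \<in> D" "b \<in> D" "a \<noteq> 0" and dd: "st (gen_submod D {a, b}) = princ D d"
  obtains a' b' where "d \<in> D" "d \<noteq> 0" "a' \<in> D" "b' \<in> D" "a' \<noteq> 0" "a = d * a'" "b = d * b'"
    "st (gen_submod D {a', b'}) = D"
proof -
  have nz: "nz_frac D (gen_submod D {a, b})" using nz_frac_pair in_qf ab by blast
  have abd: "a \<in> princ D d" "b \<in> princ D d"
    using gen_submod_superset[of "{a,b}"] star_extensive[OF nz] dd by auto
  have "princ D d \<subseteq> D"
    using star_integral[OF nz] gen_submod_least[OF submod_self, of "{a,b}"] ab dd by simp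
  hence dD: "d \<in> D" using princ_self[of d] by blast
  obtain a' where a': "a' \<in> D" "a = d * a'" using abd(1) princ_iff by blast
  obtain b' where b': "b' \<in> D" "b = d * b'" using abd(2) princ_iff by blast
  have d0: "d \<noteq> 0" and a0: "a' \<noteq> 0" using a' ab by auto
  have nz': "nz_frac D (gen_submod D {a', b'})" using nz_frac_pair in_qf a' b' a0 by blast
  have "(*) d ` st (gen_submod D {a', b'}) = (*) d ` D"
    using star_image_mult[OF in_qf[OF dD] d0 nz'] image_mult_gen_submod[of d "{a', b'}"]
      image_mult_princ[of d 1] dd a' b' by simp
  hence "st (gen_submod D {a', b'}) = D"
    using d0 by (simp add: inj_image_eq_iff inj_on_def)
  thus ?thesis using that dD d0 a' b' a0 by blast
qed

lemma princ_Int_princ_if_star_pair_princ: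
  assumes ab: "a \<in> D" "b \<in> D" "a \<noteq> 0" "b \<noteq> 0" and dd: "st (gen_submod D {a, b}) = princ D d"
  shows "\<exists>m. princ D a \<inter> princ D b = princ D m"
proof -
  obtain a' b' where d: "d \<in> D" "d \<noteq> 0" and a': "a' \<in> D" "a = d * a'" and b': "b' \<in> D" "b = d * b'"
    and a0: "a' \<noteq> 0" and comax: "st (gen_submod D {a', b'}) = D"
    using star_pair_princ_cofactors[OF ab(1-3) dd] by blast
  have "princ D a \<inter> princ D b = princ D (a * b')"
  proof
    have "a * b' = b * a'" using a' b' by simp
    hence "a * b' \<in> princ D b" using princ_memI[OF a'(1), of b] by simp
    moreover have "a * b' \<in> princ D a" using b'(1) by blast
    ultimately show "princ D (a * b') \<subseteq> princ D a \<inter> princ D b"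
      using princ_least[OF submod_princ] by blast
  next
    show "princ D a \<inter> princ D b \<subseteq> princ D (a * b')"
    proof
      fix c assume c: "c \<in> princ D a \<inter> princ D b"
      obtain s where s: "s \<in> D" "c = a * s" using c princ_iff by blast
      obtain t where t: "t \<in> D" "c = b * t" using c princ_iff by blast
      have "d * (a' * s) = d * (b' * t)" using s(2) t(2) a'(2) b'(2) by (metis mult.assoc)
      hence "b' * t = a' * s" using d(2) by simp
      hence "dvd_in D a' (b' * t)" using s(1) unfolding dvd_in_def by blast
      then obtain t' where "t' \<in> D" "t = a' * t'"
        using star_comaximal_dvd_in_mult[OF a'(1) b'(1) a0 comax t(1)] unfolding dvd_in_def by blast
      hence "c = a * b' * t'" using t a' b' by (simp add: algebra_simps)
      thus "c \<in> princ D (a * b')" using \<open>t' \<in> D\<close> by blast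
    qed
  qed
  thus ?thesis by blast
qed

end

section \<open>Factorization into f-homogeneous ideals implies GCD and star-GKD\<close>

locale star_fhomog_factorial = star_domain +
  assumes fhomog_factorization: "\<forall>x\<in>D. x \<noteq> 0 \<longrightarrow> \<not> is_unit_in D x \<longrightarrow>
    (\<exists>Is. (\<forall>I\<in>set Is. fhomog_type1 D st I) \<and> princ D x = st (ideal_prod_list D Is))"
begin

definition homog_elem :: "'a \<Rightarrow> bool" where
  "homog_elem y \<longleftrightarrow> y \<in> D \<and> fhomog_type1 D st (princ D y)"

lemma fhomog_type1_eq_princ:
  assumes "fhomog_type1 D st I"
  obtains y where "I = princ D y" "homog_elem y"
proof -
  have I: "proper_int_star D st I" "finite_type D st I"
    and F: "\<forall>J. star_ideal D st J \<longrightarrow> finite_type D st J \<longrightarrow> I \<subseteq> J \<longrightarrow> (\<exists>y. J = princ D y)"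
    using assms unfolding fhomog_type1_def star_fhomog_def star_homog_def by blast+
  then obtain y where y: "I = princ D y" unfolding proper_int_star_def by blast
  have "y \<in> I" using y princ_self by simp
  hence "y \<in> D" using I(1) unfolding proper_int_star_def by blast
  thus ?thesis using that[OF y] assms y by (simp add: homog_elem_def)
qed

lemma homog_elem_in: "homog_elem y \<Longrightarrow> y \<in> D"
  unfolding homog_elem_def by blast

lemma homog_elem_star_homog: "homog_elem y \<Longrightarrow> star_homog D st (princ D y)"
  unfolding homog_elem_def fhomog_type1_def star_fhomog_def by blast

lemma homog_elem_proper: "homog_elem y \<Longrightarrow> proper_int_star D st (princ D y)"
  using homog_elem_star_homog unfolding star_homog_def by blast

lemma homog_elem_nonzero: "homog_elem y \<Longrightarrow> y \<noteq> 0"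
  using homog_elem_proper unfolding proper_int_star_def star_ideal_def nz_frac_def by fastforce

lemma homog_elem_not_unit: "homog_elem y \<Longrightarrow> \<not> is_unit_in D y"
  using homog_elem_proper princ_unit unfolding proper_int_star_def by metis

lemma homog_elem_unique_max:
  "homog_elem y \<Longrightarrow> max_star D st P \<Longrightarrow> max_star D st Q \<Longrightarrow> y \<in> P \<Longrightarrow> y \<in> Q \<Longrightarrow> P = Q"
  using star_homog_unique_max[OF homog_elem_star_homog] princ_least max_star_submod by metis

lemma homog_elem_M_of: "homog_elem y \<Longrightarrow> max_star D st P \<Longrightarrow> y \<in> P \<Longrightarrow> M_of D st (princ D y) = P"
  using M_of_eq[OF homog_elem_star_homog] princ_least max_star_submod by metis

lemma homog_elem_type1:
  assumes y: "homog_elem y" and P: "max_star D st P" "y \<in> P" and z: "z \<in> P" "z \<noteq> 0"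
  obtains n where "z ^ n \<in> princ D y"
proof -
  have "homog_type1 D st (princ D y)" using y unfolding homog_elem_def fhomog_type1_def by blast
  then obtain n where n: "(*) (z ^ n) ` loc D P \<inter> D \<subseteq> princ D y"
    using homog_elem_M_of[OF y P] z unfolding homog_type1_def by metis
  have "z ^ n \<in> D" using max_star_subset[OF P(1)] z by blast
  moreover have "z ^ n \<in> (*) (z ^ n) ` loc D P"
    using in_loc[OF prime_ideal_max_star[OF P(1)] one_in] by force
  ultimately show ?thesis using that n by blast
qed

lemma homog_elem_star_pair_princ:
  assumes y: "homog_elem y" and b: "b \<in> D" "b \<noteq> 0"
  obtains d where "st (gen_submod D {y, b}) = princ D d"
proof -
  have nz: "nz_frac D (gen_submod D {y, b})"
    using nz_frac_pair in_qf homog_elem_in homog_elem_nonzero y b by blast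
  have "princ D y \<subseteq> st (gen_submod D {y, b})"
    using gen_submod_superset[of "{y,b}"] star_extensive[OF nz] princ_least submod_star[OF nz]
    by blast
  moreover have "finite_type D st (st (gen_submod D {y, b}))"
    using finite_type_star_gen_submod[OF _ nz] by simp
  moreover have "\<forall>J. star_ideal D st J \<longrightarrow> finite_type D st J \<longrightarrow> princ D y \<subseteq> J \<longrightarrow>
      (\<exists>d. J = princ D d)"
    using y unfolding homog_elem_def fhomog_type1_def star_fhomog_def by blast
  ultimately obtain d where "st (gen_submod D {y, b}) = princ D d"
    using star_ideal_star[OF nz] by blast
  thus ?thesis by (rule that)
qed

lemma homog_factorization:
  assumes x: "x \<in> D" "x \<noteq> 0"
  obtains u ys where "is_unit_in D u" "\<forall>y\<in>set ys. homog_elem y" "x = u * prod_list ys"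
proof (cases "is_unit_in D x")
  case True
  thus ?thesis using that[of x "[]"] by simp
next
  case False
  then obtain Is where Is: "\<forall>I\<in>set Is. fhomog_type1 D st I" "princ D x = st (ideal_prod_list D Is)"
    using fhomog_factorization x by blast
  have "\<forall>I\<in>set Is. \<exists>y. I = princ D y \<and> homog_elem y"
    using Is(1) fhomog_type1_eq_princ by (metis (no_types))
  then obtain f where f: "\<forall>I\<in>set Is. I = princ D (f I) \<and> homog_elem (f I)"
    by (auto dest: bchoice)
  define ys where "ys = map f Is"
  have "Is = map (princ D) ys" unfolding ys_def using f by (induction Is) auto
  hence "princ D x = st (princ D (prod_list ys))" using Is(2) ideal_prod_list_princ by simp
  moreover have ys: "\<forall>y\<in>set ys. homog_elem y" using f unfolding ys_def by auto
  hence "set ys \<subseteq> D" "0 \<notin> set ys" using homog_elem_in homog_elem_nonzero by blast+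
  hence "prod_list ys \<in> D" "prod_list ys \<noteq> 0" by (auto simp: prod_list_zero_iff)
  ultimately have "princ D x = princ D (prod_list ys)" using star_princ in_qf by simp
  then obtain u where "is_unit_in D u" "x = prod_list ys * u" using princ_eq_imp_associated x by blast
  thus ?thesis using that[of u ys] ys by (simp add: mult.commute)
qed

lemma homog_factor_in_prime:
  assumes Q: "prime_ideal D Q" and x: "x \<in> D" "x \<noteq> 0" "x \<in> Q"
  obtains y where "homog_elem y" "y \<in> Q" "dvd_in D y x"
proof -
  obtain u ys where f: "is_unit_in D u" "\<forall>y\<in>set ys. homog_elem y" "x = u * prod_list ys"
    using homog_factorization x by blast
  have ys: "set ys \<subseteq> D" using f homog_elem_in by blast
  have "prod_list ys \<in> Q"
    using prime_idealD[OF Q] unit_notin_prime_ideal[OF Q f(1)] f(1,3) prod_list_in[OF ys] x(3)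
    unfolding is_unit_in_def by blast
  then obtain y where y: "y \<in> set ys" "y \<in> Q" using prime_ideal_prod_list[OF Q ys] by blast
  have "dvd_in D y x"
    using dvd_in_prod_list[OF ys y(1)] f(1,3) dvd_in_mult_left unfolding is_unit_in_def by simp
  thus ?thesis using that y f(2) by blast
qed

lemma homog_elem_star_comaximal:
  assumes y: "homog_elem y" and P: "max_star D st P" "y \<in> P" and s: "s \<in> D" "s \<notin> P"
  shows "st (gen_submod D {y, s}) = D"
proof (rule ccontr)
  assume "st (gen_submod D {y, s}) \<noteq> D"
  then obtain Q where "max_star D st Q" "y \<in> Q" "s \<in> Q"
    using ex_max_star_of_star_pair homog_elem_in[OF y] homog_elem_nonzero[OF y] s(1) by blast
  thus False using homog_elem_unique_max[OF y _ P(1)] P(2) s(2) by blast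
qed

lemma homog_elem_has_lcms:
  assumes y: "homog_elem y"
  shows "has_lcms y"
  unfolding has_lcms_def
proof (intro ballI impI)
  fix b assume b: "b \<in> D" "b \<noteq> 0"
  then obtain d where "st (gen_submod D {y, b}) = princ D d"
    using homog_elem_star_pair_princ[OF y] by blast
  thus "\<exists>m. princ D y \<inter> princ D b = princ D m"
    using princ_Int_princ_if_star_pair_princ homog_elem_in[OF y] homog_elem_nonzero[OF y] b
    by blast
qed

lemma has_lcms: assumes "x \<in> D" "x \<noteq> 0" shows "has_lcms x"
proof -
  obtain u ys where f: "is_unit_in D u" "\<forall>y\<in>set ys. homog_elem y" "x = u * prod_list ys"
    using homog_factorization assms by blast
  have "prod_list ys \<in> D \<and> has_lcms (prod_list ys)"
    using f(2)
  proof (induction ys)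
    case Nil
    thus ?case using unit_has_lcms[of 1] by (simp add: is_unit_in_def)
  next
    case (Cons y ys)
    hence "homog_elem y" "prod_list ys \<in> D" "has_lcms (prod_list ys)" by auto
    thus ?case
      using has_lcms_mult homog_elem_has_lcms homog_elem_in homog_elem_nonzero by (simp add: mult_in)
  qed
  thus ?thesis
    using has_lcms_mult unit_has_lcms[OF f(1)] f(1,3) unfolding is_unit_in_iff by simp
qed

lemma gcd_domain: "gcd_domain D"
  using gcd_domain_if_has_lcms has_lcms by blast

text \<open>Homogeneous factors of a and b inside P generate a principal star ideal inside P, whose
  generator is a common divisor.\<close>

lemma coprime_not_both_in_max_star:
  assumes P: "max_star D st P" and ab: "a \<in> D" "b \<in> D" "a \<noteq> 0" "b \<noteq> 0" "coprime_in a b"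
    and in_P: "a \<in> P" "b \<in> P"
  shows False
proof -
  have PP: "prime_ideal D P" using prime_ideal_max_star[OF P] .
  obtain y where y: "homog_elem y" "y \<in> P" "dvd_in D y a"
    using homog_factor_in_prime[OF PP ab(1,3) in_P(1)] by blast
  obtain z where z: "homog_elem z" "z \<in> P" "dvd_in D z b"
    using homog_factor_in_prime[OF PP ab(2,4) in_P(2)] by blast
  obtain h where h: "st (gen_submod D {y, z}) = princ D h"
    using homog_elem_star_pair_princ[OF y(1) homog_elem_in[OF z(1)] homog_elem_nonzero[OF z(1)]] .
  have nz: "nz_frac D (gen_submod D {y, z})"
    using nz_frac_pair in_qf homog_elem_in homog_elem_nonzero y z by blast
  have hP: "h \<in> P"
    using star_pair_subset_max_star[OF P y(2) z(2) homog_elem_nonzero[OF y(1)]] h princ_self by blast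
  have "{y, z} \<subseteq> princ D h" using gen_submod_superset[of "{y,z}"] star_extensive[OF nz] h by blast
  hence "dvd_in D h a" "dvd_in D h b" using princ_iff_dvd_in dvd_in_trans y z by auto
  hence "is_unit_in D h" using ab(5) hP max_star_subset[OF P] unfolding coprime_in_def by blast
  thus False using max_star_not_unit[OF P hP] by blast
qed

lemma valuation_domain_loc:
  assumes P: "max_star D st P"
  shows "valuation_domain (loc D P)"
  unfolding valuation_domain_def
proof (intro conjI ballI impI)
  have PP: "prime_ideal D P" using prime_ideal_max_star[OF P] .
  show "subring (loc D P)" using subring_loc[OF PP] .
  fix x assume x: "x \<in> qf (loc D P)" "x \<noteq> 0"
  then obtain a b where ab: "a \<in> D" "b \<in> D" "a \<noteq> 0" "b \<noteq> 0" "coprime_in a b" "x = a / b"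
    using gcd_domain_qf_coprime[OF gcd_domain] qf_loc_subset[OF PP] by blast
  hence "b \<notin> P \<or> a \<notin> P" using coprime_not_both_in_max_star[OF P] by blast
  thus "x \<in> loc D P \<or> inverse x \<in> loc D P" using ab loc_memI by auto
qed

text \<open>If t = a/b with a, b coprime lies in every localization and b is a nonunit, a
  homogeneous factor y of b in some P is star-comaximal with the denominator s of t in D_P,
  hence divides a as well.\<close>

lemma Int_loc_max_star_subset:
  assumes t: "t \<in> qf D" "\<And>P. max_star D st P \<Longrightarrow> t \<in> loc D P"
  shows "t \<in> D"
proof (cases "t = 0")
  case False
  then obtain a b where ab: "a \<in> D" "b \<in> D" "a \<noteq> 0" "b \<noteq> 0" "coprime_in a b" "t = a / b"
    using gcd_domain_qf_coprime[OF gcd_domain t(1)] by blast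
  show ?thesis
  proof (cases "is_unit_in D b")
    case True
    thus ?thesis using ab unfolding is_unit_in_iff by (simp add: divide_inverse mult_in)
  next
    case False
    then obtain P where P: "max_star D st P" "b \<in> P"
      using ex_max_star_of_nonunit ab by blast
    obtain y where y: "homog_elem y" "y \<in> P" "dvd_in D y b"
      using homog_factor_in_prime[OF prime_ideal_max_star[OF P(1)] ab(2,4) P(2)] by blast
    obtain c s where cs: "c \<in> D" "s \<in> D" "s \<notin> P" "t = c / s"
      using t(2)[OF P(1)] unfolding loc_iff by blast
    have "s \<noteq> 0" using cs zero_in_max_star[OF P(1)] by auto
    hence "s * a = c * b" using ab cs by (simp add: field_simps)
    hence "dvd_in D y (s * a)" using dvd_in_mult_left[OF y(3) cs(1)] by (simp add: mult.commute)
    hence "dvd_in D y a"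
      using star_comaximal_dvd_in_mult[OF homog_elem_in[OF y(1)] cs(2) homog_elem_nonzero[OF y(1)]
          homog_elem_star_comaximal[OF y(1) P(1) y(2) cs(2,3)] ab(1)]
      by blast
    hence "is_unit_in D y" using y ab(5) homog_elem_in unfolding coprime_in_def by blast
    thus ?thesis using homog_elem_not_unit[OF y(1)] by blast
  qed
qed simp

lemma eq_Int_loc_max_star: "D = qf D \<inter> \<Inter>{loc D P | P. max_star D st P}"
proof
  show "D \<subseteq> qf D \<inter> \<Inter>{loc D P | P. max_star D st P}"
    using in_qf in_loc prime_ideal_max_star by blast
  show "qf D \<inter> \<Inter>{loc D P | P. max_star D st P} \<subseteq> D"
  proof
    fix t assume "t \<in> qf D \<inter> \<Inter>{loc D P | P. max_star D st P}"
    hence "t \<in> qf D" "\<And>P. max_star D st P \<Longrightarrow> t \<in> loc D P" by blast+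
    thus "t \<in> D" by (rule Int_loc_max_star_subset)
  qed
qed

lemma finite_max_star_containing:
  assumes x: "x \<in> D" "x \<noteq> 0"
  shows "finite {P. max_star D st P \<and> x \<in> P}"
proof -
  obtain u ys where f: "is_unit_in D u" "\<forall>y\<in>set ys. homog_elem y" "x = u * prod_list ys"
    using homog_factorization x by blast
  have "{P. max_star D st P \<and> x \<in> P} \<subseteq> (\<lambda>y. M_of D st (princ D y)) ` set ys"
  proof
    fix P assume "P \<in> {P. max_star D st P \<and> x \<in> P}"
    hence P: "max_star D st P" "x \<in> P" by auto
    have PP: "prime_ideal D P" using prime_ideal_max_star[OF P(1)] .
    have ys: "set ys \<subseteq> D" using f(2) homog_elem_in by blast
    have "prod_list ys \<in> P"
      using prime_idealD[OF PP] unit_notin_prime_ideal[OF PP f(1)] f(1,3) prod_list_in[OF ys] P(2)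
      unfolding is_unit_in_def by blast
    then obtain y where "y \<in> set ys" "y \<in> P" using prime_ideal_prod_list[OF PP ys] by blast
    thus "P \<in> (\<lambda>y. M_of D st (princ D y)) ` set ys" using homog_elem_M_of f(2) P(1) by force
  qed
  thus ?thesis using finite_surj by blast
qed

lemma max_star_no_common_prime:
  assumes "max_star D st P1" "max_star D st P2" "P1 \<noteq> P2"
  shows "\<not> (\<exists>Q. prime_ideal D Q \<and> Q \<noteq> {0} \<and> Q \<subseteq> P1 \<and> Q \<subseteq> P2)"
proof
  assume "\<exists>Q. prime_ideal D Q \<and> Q \<noteq> {0} \<and> Q \<subseteq> P1 \<and> Q \<subseteq> P2"
  then obtain Q where Q: "prime_ideal D Q" "Q \<noteq> {0}" "Q \<subseteq> P1" "Q \<subseteq> P2" by blast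
  obtain x where x: "x \<in> Q" "x \<noteq> 0" "x \<in> D" using prime_ideal_ex_nonzero Q by blast
  obtain y where "homog_elem y" "y \<in> Q" using homog_factor_in_prime[OF Q(1) x(3) x(2) x(1)] by blast
  thus False using homog_elem_unique_max[OF _ assms(1,2)] assms(3) Q(3,4) by blast
qed

text \<open>A nonzero prime Q inside P contains a homogeneous y, and type 1 puts a power of every
  z \<in> P into yD \<subseteq> Q.\<close>

lemma height_one_max_star:
  assumes P: "max_star D st P"
  shows "height_one D P"
  unfolding height_one_def
proof (intro conjI allI impI)
  show "prime_ideal D P" using prime_ideal_max_star[OF P] .
  show "P \<noteq> {0}" using max_star_nz_frac[OF P] unfolding nz_frac_def by blast
  fix Q assume Q: "prime_ideal D Q" "Q \<noteq> {0}" "Q \<subseteq> P"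
  obtain x where x: "x \<in> Q" "x \<noteq> 0" "x \<in> D" using prime_ideal_ex_nonzero Q by blast
  obtain y where y: "homog_elem y" "y \<in> Q" using homog_factor_in_prime[OF Q(1) x(3) x(2) x(1)] by blast
  have "z \<in> Q" if z: "z \<in> P" for z
  proof (cases "z = 0")
    case True
    thus ?thesis using zero_in_prime_ideal Q by blast
  next
    case False
    obtain n where "z ^ n \<in> princ D y" using homog_elem_type1[OF y(1) P _ z False] y Q(3) by blast
    hence "z ^ n \<in> Q" using princ_least prime_ideal_submod Q y(2) by blast
    thus ?thesis using prime_ideal_power Q z max_star_subset[OF P] by blast
  qed
  thus "Q = P" using Q by blast
qed

lemma gcd_domain_star_GKD: "gcd_domain D \<and> star_GKD D st"
  unfolding star_GKD_def star_IRKT_def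
  using gcd_domain valuation_domain_loc eq_Int_loc_max_star finite_max_star_containing
    max_star_no_common_prime height_one_max_star
  by blast

end

section \<open>GCD star-GKD domains factor into f-homogeneous ideals\<close>

locale gcd_star_GKD = star_domain +
  assumes gcd: "gcd_domain D" and GKD: "star_GKD D st"
begin

lemma valuation_domain_loc: "max_star D st P \<Longrightarrow> valuation_domain (loc D P)"
  using GKD[unfolded star_GKD_def star_IRKT_def, THEN conjunct1, THEN conjunct1] by blast

lemma finite_max_star_containing: "x \<in> D \<Longrightarrow> x \<noteq> 0 \<Longrightarrow> finite {P. max_star D st P \<and> x \<in> P}"
  using GKD[unfolded star_GKD_def star_IRKT_def, THEN conjunct1, THEN conjunct2, THEN conjunct2,
      THEN conjunct1]
  by blast

lemma height_one_max_star: "max_star D st P \<Longrightarrow> height_one D P"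
  using GKD[unfolded star_GKD_def, THEN conjunct2] by blast

lemma in_if_in_all_loc:
  assumes "t \<in> qf D" "\<And>P. max_star D st P \<Longrightarrow> t \<in> loc D P"
  shows "t \<in> D"
proof -
  have "t \<in> qf D \<inter> \<Inter>{loc D P | P. max_star D st P}" using assms by blast
  thus ?thesis
    using GKD[unfolded star_GKD_def star_IRKT_def, THEN conjunct1, THEN conjunct2, THEN conjunct1]
    by simp
qed

lemma loc_comparable:
  assumes P: "max_star D st P" and ab: "a \<in> D" "b \<in> D"
  shows "(\<exists>v\<in>loc D P. b = a * v) \<or> (\<exists>v\<in>loc D P. a = b * v)"
proof -
  have PP: "prime_ideal D P" using prime_ideal_max_star[OF P] .
  show ?thesis
  proof (cases "a = 0 \<or> b = 0")
    case True
    thus ?thesis using in_loc[OF PP zero_in] by auto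
  next
    case False
    have "a / b \<in> qf (loc D P)" using qf_subset_qf_loc[OF PP] qfI ab False by blast
    moreover have "a / b \<noteq> 0" using False by simp
    ultimately have "a / b \<in> loc D P \<or> inverse (a / b) \<in> loc D P"
      using valuation_domain_loc[OF P] unfolding valuation_domain_def by blast
    thus ?thesis
    proof
      assume "a / b \<in> loc D P"
      thus ?thesis using False by (intro disjI2 bexI[of _ "a/b"]) auto
    next
      assume "inverse (a / b) \<in> loc D P"
      thus ?thesis using False by (intro disjI1 bexI[of _ "b/a"]) auto
    qed
  qed
qed

lemma coprime_not_loc_multiple:
  assumes P: "max_star D st P" and ab: "a \<in> D" "b \<in> D" "a \<noteq> 0" "b \<noteq> 0" "coprime_in a b"
    and bP: "b \<in> P" and v: "v \<in> loc D P" "a = b * v"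
  shows False
proof -
  obtain r s where rs: "r \<in> D" "s \<in> D" "s \<notin> P" "v = r / s" using v(1) unfolding loc_iff by blast
  have "s \<noteq> 0" using rs zero_in_max_star[OF P] by auto
  hence "s * a = b * r" using rs v(2) by simp
  hence "dvd_in D b (s * a)" unfolding dvd_in_def using rs by blast
  hence "dvd_in D b s" using gcd_domain_coprime_dvd_in_mult[OF gcd ab rs(2)] by blast
  hence "s \<in> princ D b" using princ_iff_dvd_in by blast
  thus False using princ_least[OF max_star_submod[OF P] bP] rs(3) by blast
qed

lemma coprime_star_comaximal:
  assumes ab: "a \<in> D" "b \<in> D" "a \<noteq> 0" "b \<noteq> 0" "coprime_in a b"
  shows "st (gen_submod D {a, b}) = D"
proof (rule ccontr)
  assume "st (gen_submod D {a, b}) \<noteq> D"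
  then obtain P where P: "max_star D st P" "a \<in> P" "b \<in> P"
    using ex_max_star_of_star_pair ab by blast
  show False
    using loc_comparable[OF P(1) ab(1,2)]
      coprime_not_loc_multiple[OF P(1) ab P(3)]
      coprime_not_loc_multiple[OF P(1) ab(2,1,4,3) coprime_in_commute[OF ab(5)] P(2)]
    by blast
qed

lemma star_pair_princ:
  assumes ab: "a \<in> D" "b \<in> D" "a \<noteq> 0" "b \<noteq> 0"
  obtains g where "g \<in> D" "g \<noteq> 0" "st (gen_submod D {a, b}) = princ D g"
proof -
  obtain g a' b' where r: "g \<in> D" "a' \<in> D" "b' \<in> D" "g \<noteq> 0" "a = g * a'" "b = g * b'"
    "coprime_in a' b'"
    using gcd_domain_coprime_factors[OF gcd ab] by blast
  have a'0: "a' \<noteq> 0" and b'0: "b' \<noteq> 0" using r ab by auto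
  have nz': "nz_frac D (gen_submod D {a', b'})" using nz_frac_pair in_qf r a'0 by blast
  have "gen_submod D {a, b} = (*) g ` gen_submod D {a', b'}"
    using image_mult_gen_submod r by simp
  hence "st (gen_submod D {a, b}) = (*) g ` st (gen_submod D {a', b'})"
    using star_image_mult[OF in_qf[OF r(1)] r(4) nz'] by simp
  also have "\<dots> = princ D g"
    using coprime_star_comaximal[OF r(2,3) a'0 b'0 r(7)] image_mult_princ[of g 1] by simp
  finally show ?thesis using that r by blast
qed

lemma star_gen_submod_princ_integral:
  "finite S \<Longrightarrow> S \<subseteq> D \<Longrightarrow> s \<in> S \<Longrightarrow> s \<noteq> 0 \<Longrightarrow>
    \<exists>g. g \<in> D \<and> g \<noteq> 0 \<and> st (gen_submod D S) = princ D g"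
proof (induction S arbitrary: s rule: finite_induct)
  case (insert t S)
  show ?case
  proof (cases "\<exists>s'\<in>S. s' \<noteq> 0")
    case True
    then obtain s' where s': "s' \<in> S" "s' \<noteq> 0" by blast
    obtain g where g: "g \<in> D" "g \<noteq> 0" "st (gen_submod D S) = princ D g"
      using insert s' by blast
    have nzS: "nz_frac D (gen_submod D S)"
      using nz_frac_gen_submod[OF insert(1) _ s'] insert.prems(1) in_qf by blast
    show ?thesis
    proof (cases "t = 0")
      case True
      hence "gen_submod D (insert t S) = gen_submod D S"
        using gen_submod_insert[of t S] ideal_sum_zero[of "gen_submod D S"]
        by (simp add: ideal_sum_def add.commute)
      thus ?thesis using g by auto
    next
      case False
      have nzt: "nz_frac D (princ D t)" using nz_frac_princ in_qf insert.prems(1) False by blast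
      have "st (gen_submod D (insert t S)) = st (ideal_sum (princ D t) (gen_submod D S))"
        using gen_submod_insert by simp
      also have "\<dots> = st (ideal_sum (princ D t) (princ D g))" using star_ideal_sum_star[OF nzt nzS] g by simp
      also have "\<dots> = st (gen_submod D {t, g})" using gen_submod_pair by simp
      moreover obtain g' where "g' \<in> D" "g' \<noteq> 0" "st (gen_submod D {t, g}) = princ D g'"
        using star_pair_princ[of t g] insert.prems(1) g(1,2) False by blast
      ultimately show ?thesis by auto
    qed
  next
    case False
    hence "gen_submod D S = {0}" using gen_submod_subset_zero by blast
    hence "gen_submod D (insert t S) = princ D t" using gen_submod_insert ideal_sum_zero by simp
    moreover have "t \<in> D" "t \<noteq> 0" using False insert.prems by auto
    ultimately show ?thesis using star_princ[OF in_qf] by (intro exI[of _ t]) simp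
  qed
qed simp

lemma star_gen_submod_princ:
  assumes S: "finite S" "S \<subseteq> qf D" "s \<in> S" "s \<noteq> 0"
  obtains y where "st (gen_submod D S) = princ D y"
proof -
  obtain d where d: "d \<in> D" "d \<noteq> 0" "\<forall>s\<in>S. d * s \<in> D" using common_denominator S by blast
  have "(*) d ` S \<subseteq> D" "d * s \<in> (*) d ` S" "d * s \<noteq> 0" using S d by auto
  then obtain g where g: "st (gen_submod D ((*) d ` S)) = princ D g"
    using star_gen_submod_princ_integral[of "(*) d ` S"] S(1) by blast
  have nz: "nz_frac D (gen_submod D S)" using nz_frac_gen_submod S by blast
  have "(*) d ` st (gen_submod D S) = princ D g"
    using star_image_mult[OF in_qf[OF d(1)] d(2) nz] image_mult_gen_submod g by simp
  hence "(*) (inverse d) ` ((*) d ` st (gen_submod D S)) = princ D (inverse d * g)"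
    using image_mult_princ by simp
  moreover have "(*) (inverse d) ` ((*) d ` X) = X" for X
    using d(2) by (simp add: image_image mult.assoc[symmetric])
  ultimately have "st (gen_submod D S) = princ D (inverse d * g)" by metis
  thus ?thesis by (rule that)
qed

lemma finite_type_eq_princ:
  assumes "finite_type D st J"
  obtains y where "J = princ D y"
proof -
  obtain F where F: "nz_frac D F" "fin_gen D F" "J = st F"
    using assms unfolding finite_type_def by blast
  obtain S where S: "finite S" "F = gen_submod D S" using F unfolding fin_gen_def by blast
  have "S \<subseteq> qf D" using gen_submod_superset frac_ideal_mem_qf F S unfolding nz_frac_def by blast
  moreover have "\<exists>s\<in>S. s \<noteq> 0"
  proof (rule ccontr)
    assume "\<not> (\<exists>s\<in>S. s \<noteq> 0)"
    hence "F = {0}" using gen_submod_subset_zero S(2) by blast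
    thus False using F(1) unfolding nz_frac_def by blast
  qed
  ultimately obtain y where "st F = princ D y" using star_gen_submod_princ S by metis
  thus ?thesis using that F(3) by blast
qed

definition loc_radical :: "'a set \<Rightarrow> 'a \<Rightarrow> 'a set" where
  "loc_radical P x = {a \<in> D. \<exists>N. a ^ N \<in> (*) x ` loc D P}"

lemma image_mult_loc_mult:
  "prime_ideal D P \<Longrightarrow> w \<in> (*) x ` loc D P \<Longrightarrow> v \<in> loc D P \<Longrightarrow> w * v \<in> (*) x ` loc D P"
  using loc_mult by (auto simp: mult.assoc)

text \<open>Since D_P is a valuation ring, one of a, b divides the other in D_P, so a power of
  a + b is a multiple of a power of a or of b.\<close>

lemma submod_loc_radical:
  assumes P: "max_star D st P" and x: "x \<in> D"
  shows "submod D (loc_radical P x)"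
  unfolding submod_def
proof (intro conjI ballI)
  have PP: "prime_ideal D P" using prime_ideal_max_star[OF P] .
  show "0 \<in> loc_radical P x"
    unfolding loc_radical_def using in_loc[OF PP zero_in] by (auto intro!: exI[of _ 1] image_eqI[of _ _ 0])
  fix a b assume a: "a \<in> loc_radical P x" and b: "b \<in> loc_radical P x"
  obtain N where N: "a \<in> D" "a ^ N \<in> (*) x ` loc D P" using a unfolding loc_radical_def by blast
  obtain M where M: "b \<in> D" "b ^ M \<in> (*) x ` loc D P" using b unfolding loc_radical_def by blast
  have "\<exists>K. (a + b) ^ K \<in> (*) x ` loc D P"
  proof (cases "\<exists>v\<in>loc D P. b = a * v")
    case True
    then obtain v where v: "v \<in> loc D P" "b = a * v" by blast
    have "(a + b) ^ N = a ^ N * (1 + v) ^ N" using v by (simp add: power_mult_distrib[symmetric] algebra_simps)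
    moreover have "(1 + v) ^ N \<in> loc D P" using loc_power[OF PP loc_add[OF PP in_loc[OF PP one_in] v(1)]] .
    ultimately show ?thesis using image_mult_loc_mult[OF PP N(2)] by metis
  next
    case False
    then obtain v where v: "v \<in> loc D P" "a = b * v" using loc_comparable[OF P N(1) M(1)] by blast
    have "(a + b) ^ M = b ^ M * (1 + v) ^ M" using v by (simp add: power_mult_distrib[symmetric] algebra_simps)
    moreover have "(1 + v) ^ M \<in> loc D P" using loc_power[OF PP loc_add[OF PP in_loc[OF PP one_in] v(1)]] .
    ultimately show ?thesis using image_mult_loc_mult[OF PP M(2)] by metis
  qed
  thus "a + b \<in> loc_radical P x" unfolding loc_radical_def using N M by blast
next
  have PP: "prime_ideal D P" using prime_ideal_max_star[OF P] .
  fix d a assume d: "d \<in> D" and a: "a \<in> loc_radical P x"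
  obtain N where N: "a \<in> D" "a ^ N \<in> (*) x ` loc D P" using a unfolding loc_radical_def by blast
  have "(d * a) ^ N = a ^ N * d ^ N" by (simp add: power_mult_distrib mult.commute)
  moreover have "d ^ N \<in> loc D P" using in_loc[OF PP power_in[OF d]] .
  ultimately have "(d * a) ^ N \<in> (*) x ` loc D P" using image_mult_loc_mult[OF PP N(2)] by metis
  thus "d * a \<in> loc_radical P x" unfolding loc_radical_def using d N by blast
qed

lemma loc_radical_subset:
  assumes P: "max_star D st P" and x: "x \<in> P"
  shows "loc_radical P x \<subseteq> P"
proof
  have PP: "prime_ideal D P" using prime_ideal_max_star[OF P] .
  fix a assume "a \<in> loc_radical P x"
  then obtain N where "a \<in> D" "a ^ N \<in> (*) x ` loc D P" unfolding loc_radical_def by blast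
  then obtain u where N: "a \<in> D" "u \<in> loc D P" "a ^ N = x * u" by blast
  then obtain c s where cs: "c \<in> D" "s \<in> D" "s \<notin> P" "u = c / s" unfolding loc_iff by blast
  have "s \<noteq> 0" using cs zero_in_max_star[OF P] by auto
  hence "s * a ^ N = x * c" using N cs by (simp add: field_simps)
  moreover have "x * c \<in> P" using submod_mult_right[OF max_star_submod[OF P] cs(1) x] .
  ultimately have "a ^ N \<in> P" using prime_idealD[OF PP cs(2) power_in[OF N(1)]] cs(3) by auto
  thus "a \<in> P" using prime_ideal_power[OF PP N(1)] by blast
qed

lemma prime_ideal_loc_radical:
  assumes P: "max_star D st P" and x: "x \<in> P"
  shows "prime_ideal D (loc_radical P x)"
  unfolding prime_ideal_def
proof (intro conjI ballI impI)
  have PP: "prime_ideal D P" using prime_ideal_max_star[OF P] .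
  have xD: "x \<in> D" using x max_star_subset[OF P] by blast
  show "submod D (loc_radical P x)" using submod_loc_radical[OF P xD] .
  show "loc_radical P x \<subseteq> D" unfolding loc_radical_def by blast
  show "loc_radical P x \<noteq> D"
    using loc_radical_subset[OF P x] one_notin_max_star[OF P] by blast
  fix a b assume ab: "a \<in> D" "b \<in> D" "a * b \<in> loc_radical P x"
  obtain N where N: "(a * b) ^ N \<in> (*) x ` loc D P" using ab unfolding loc_radical_def by blast
  show "a \<in> loc_radical P x \<or> b \<in> loc_radical P x"
  proof (cases "\<exists>v\<in>loc D P. b = a * v")
    case True
    then obtain v where v: "v \<in> loc D P" "b = a * v" by blast
    have "b ^ (2 * N) = (a * b) ^ N * v ^ N"
      using v by (simp add: power_mult power2_eq_square power_mult_distrib algebra_simps)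
    hence "b ^ (2 * N) \<in> (*) x ` loc D P"
      using image_mult_loc_mult[OF PP N loc_power[OF PP v(1)]] by simp
    thus ?thesis unfolding loc_radical_def using ab by blast
  next
    case False
    then obtain v where v: "v \<in> loc D P" "a = b * v" using loc_comparable[OF P ab(1,2)] by blast
    have "a ^ (2 * N) = (a * b) ^ N * v ^ N"
      using v by (simp add: power_mult power2_eq_square power_mult_distrib algebra_simps)
    hence "a ^ (2 * N) \<in> (*) x ` loc D P"
      using image_mult_loc_mult[OF PP N loc_power[OF PP v(1)]] by simp
    thus ?thesis unfolding loc_radical_def using ab by blast
  qed
qed

text \<open>The radical of x D_P in D is a nonzero prime inside P, hence equal to P by height one.\<close>

lemma power_in_image_mult_loc:
  assumes P: "max_star D st P" and x: "x \<in> P" "x \<noteq> 0" and z: "z \<in> P"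
  obtains N where "z ^ N \<in> (*) x ` loc D P"
proof -
  have PP: "prime_ideal D P" using prime_ideal_max_star[OF P] .
  have "x \<in> loc_radical P x"
    unfolding loc_radical_def using x max_star_subset[OF P] in_loc[OF PP one_in]
    by (auto intro!: exI[of _ 1] image_eqI[of _ _ 1])
  hence "loc_radical P x \<noteq> {0}" using x(2) by blast
  hence "loc_radical P x = P"
    using height_one_max_star[OF P] prime_ideal_loc_radical[OF P x(1)] loc_radical_subset[OF P x(1)]
    unfolding height_one_def by blast
  thus ?thesis using that z unfolding loc_radical_def by blast
qed

text \<open>Given x = g a with a \<notin> P and a maximal star ideal Q \<noteq> P, write z^N = x w with z \<in> P - Q,
  and split g = h b with h = gcd(g, z^N). Then h \<notin> Q, and b \<notin> P since b is coprime to
  z^N/h = b a w.\<close>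

lemma split_off_factor:
  assumes P: "max_star D st P" and x: "x \<in> P" "x \<noteq> 0"
    and Q: "max_star D st Q" "Q \<noteq> P" and ga: "g \<in> D" "a \<in> D" "x = g * a" "a \<notin> P"
  obtains h b where "h \<in> D" "b \<in> D" "g = h * b" "b \<notin> P" "h \<notin> Q"
proof -
  have PP: "prime_ideal D P" using prime_ideal_max_star[OF P] .
  obtain z where z: "z \<in> P" "z \<notin> Q" using max_star_antisym[OF P Q(1)] Q(2) by blast
  have zD: "z \<in> D" using z max_star_subset[OF P] by blast
  obtain N where "z ^ N \<in> (*) x ` loc D P" using power_in_image_mult_loc[OF P x z(1)] by blast
  then obtain w where w: "w \<in> loc D P" "z ^ N = x * w" by blast
  have g0: "g \<noteq> 0" using ga x by auto
  have zN0: "z ^ N \<noteq> 0" using z zero_in_max_star[OF Q(1)] by auto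
  obtain h b c where r: "h \<in> D" "b \<in> D" "c \<in> D" "h \<noteq> 0" "g = h * b" "z ^ N = h * c"
    "coprime_in b c"
    using gcd_domain_coprime_factors[OF gcd ga(1) power_in[OF zD] g0 zN0] by blast
  have "b \<notin> P"
  proof
    assume bP: "b \<in> P"
    obtain r s where rs: "r \<in> D" "s \<in> D" "s \<notin> P" "w = r / s" using w(1) unfolding loc_iff by blast
    have "s \<noteq> 0" using rs zero_in_max_star[OF P] by auto
    have "h * c = h * (b * a * w)" using r w ga by (simp add: algebra_simps)
    hence "c = b * a * w" using r(4) by simp
    hence "s * c = (a * r) * b" using rs \<open>s \<noteq> 0\<close> by (simp add: field_simps)
    moreover have "(a * r) * b \<in> P" using submod_mult[OF max_star_submod[OF P] _ bP] ga rs by blast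
    ultimately have "c \<in> P" using prime_idealD[OF PP rs(2) r(3)] rs(3) by auto
    have "b \<noteq> 0" "c \<noteq> 0" using r g0 zN0 by auto
    hence "st (gen_submod D {b, c}) \<subseteq> P" using star_pair_subset_max_star[OF P bP \<open>c \<in> P\<close>] by blast
    thus False using coprime_star_comaximal r \<open>b \<noteq> 0\<close> \<open>c \<noteq> 0\<close> one_notin_max_star[OF P] by auto
  qed
  moreover have "h \<notin> Q"
  proof
    assume "h \<in> Q"
    hence "z ^ N \<in> Q" using submod_mult_right[OF max_star_submod[OF Q(1)] r(3)] r(6) by simp
    thus False using prime_ideal_power[OF prime_ideal_max_star[OF Q(1)] zD] z by blast
  qed
  ultimately show ?thesis using that r by blast
qed

lemma split_off_max_star:
  assumes P: "max_star D st P" and x: "x \<in> P" "x \<noteq> 0"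
    and T: "finite T" "T \<subseteq> {Q. max_star D st Q} - {P}"
  obtains g a where "g \<in> D" "a \<in> D" "x = g * a" "a \<notin> P" "\<forall>Q\<in>T. g \<notin> Q"
proof -
  have "\<exists>g a. g \<in> D \<and> a \<in> D \<and> x = g * a \<and> a \<notin> P \<and> (\<forall>Q\<in>T. g \<notin> Q)"
    using T
  proof (induction T rule: finite_induct)
    case empty
    thus ?case using x max_star_subset[OF P] one_notin_max_star[OF P]
      by (intro exI[of _ x] exI[of _ 1]) auto
  next
    case (insert Q T)
    then obtain g a where ga: "g \<in> D" "a \<in> D" "x = g * a" "a \<notin> P" "\<forall>Q\<in>T. g \<notin> Q" by blast
    have Q: "max_star D st Q" "Q \<noteq> P" using insert.prems by auto
    obtain h b where hb: "h \<in> D" "b \<in> D" "g = h * b" "b \<notin> P" "h \<notin> Q"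
      using split_off_factor[OF P x Q ga(1-4)] .
    have "x = h * (b * a)" using ga hb by (simp add: mult.assoc)
    moreover have "b * a \<notin> P"
      using prime_idealD[OF prime_ideal_max_star[OF P] hb(2) ga(2)] hb(4) ga(4) by blast
    moreover have "h \<notin> Q'" if "Q' \<in> T" for Q'
    proof
      assume "h \<in> Q'"
      moreover have "max_star D st Q'" using that insert.prems by blast
      ultimately have "g \<in> Q'" using submod_mult_right[OF max_star_submod hb(2)] hb(3) by simp
      thus False using that ga(5) by blast
    qed
    ultimately show ?case using hb(1,2,5) ga(2) by blast
  qed
  thus ?thesis using that by blast
qed

definition isolated_in :: "'a set \<Rightarrow> 'a \<Rightarrow> bool" where
  "isolated_in P g \<longleftrightarrow> max_star D st P \<and> g \<in> P \<and> g \<noteq> 0 \<and>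
    (\<forall>Q. max_star D st Q \<and> g \<in> Q \<longrightarrow> Q = P)"

lemma isolated_in_in: "isolated_in P g \<Longrightarrow> g \<in> D"
  unfolding isolated_in_def using max_star_subset by blast

lemma isolated_star_homog:
  assumes g: "isolated_in P g"
  shows "star_homog D st (princ D g)"
proof -
  have P: "max_star D st P" and gP: "g \<in> P" and g0: "g \<noteq> 0"
    and U: "\<And>Q. max_star D st Q \<Longrightarrow> g \<in> Q \<Longrightarrow> Q = P"
    using g unfolding isolated_in_def by auto
  have gD: "g \<in> D" using isolated_in_in[OF g] .
  have inP: "A \<subseteq> P" if A: "proper_int_star D st A" "princ D g \<subseteq> A" for A
  proof -
    obtain Q where Q: "max_star D st Q" "A \<subseteq> Q" using ex_max_star_superset[OF A(1)] by blast
    have "g \<in> Q" using A(2) Q(2) princ_self by blast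
    hence "Q = P" using U Q(1) by blast
    thus "A \<subseteq> P" using Q(2) by simp
  qed
  have "1 \<notin> princ D g" using princ_least[OF max_star_submod[OF P] gP] one_notin_max_star[OF P] by blast
  hence "princ D g \<noteq> D" by (metis one_in)
  hence "proper_int_star D st (princ D g)"
    unfolding proper_int_star_def using star_ideal_princ[OF in_qf[OF gD] g0] princ_subset[OF gD]
    by (intro conjI)
  moreover have "st (ideal_sum A B) \<noteq> D"
    if "proper_int_star D st A" "princ D g \<subseteq> A" "proper_int_star D st B" "princ D g \<subseteq> B" for A B
  proof
    have "A \<subseteq> P" "B \<subseteq> P" using inP that by blast+
    hence "ideal_sum A B \<subseteq> P" by (rule ideal_sum_least[OF max_star_submod[OF P]])
    moreover have "nz_frac D (ideal_sum A B)"
      using nz_frac_ideal_sum that(1,3) unfolding proper_int_star_def star_ideal_def by blast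
    ultimately have sub: "st (ideal_sum A B) \<subseteq> P" using star_subset_max_star[OF P] by blast
    assume "st (ideal_sum A B) = D"
    hence "1 \<in> st (ideal_sum A B)" by simp
    thus False using sub one_notin_max_star[OF P] by blast
  qed
  ultimately show ?thesis
    unfolding star_homog_def using finite_type_princ[OF in_qf[OF gD] g0] by blast
qed

text \<open>For z \<in> P we have z^(N+1) = g w z with w z \<in> D_P, so every e \<in> z^(N+1) D_P \<inter> D has
  e/g in D_P, and trivially in D_Q for the other Q since g \<notin> Q.\<close>

lemma isolated_homog_type1:
  assumes g: "isolated_in P g"
  shows "homog_type1 D st (princ D g)"
  unfolding homog_type1_def
proof (intro conjI ballI impI)
  have P: "max_star D st P" and gP: "g \<in> P" and g0: "g \<noteq> 0"
    and U: "\<And>Q. max_star D st Q \<Longrightarrow> g \<in> Q \<Longrightarrow> Q = P"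
    using g unfolding isolated_in_def by auto
  have PP: "prime_ideal D P" using prime_ideal_max_star[OF P] .
  have gD: "g \<in> D" using isolated_in_in[OF g] .
  show H: "star_homog D st (princ D g)" using isolated_star_homog[OF g] .
  have M: "M_of D st (princ D g) = P" using M_of_eq[OF H P princ_least[OF max_star_submod[OF P] gP]] .
  fix z assume z: "z \<in> M_of D st (princ D g)" "z \<noteq> 0"
  hence zP: "z \<in> P" using M by simp
  obtain N where "z ^ N \<in> (*) g ` loc D P" using power_in_image_mult_loc[OF P gP g0 zP] by blast
  then obtain w where w: "w \<in> loc D P" "z ^ N = g * w" by blast
  have zV: "z \<in> loc D P" using in_loc[OF PP] zP max_star_subset[OF P] by blast
  have "(*) (z ^ Suc N) ` loc D P \<inter> D \<subseteq> princ D g"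
  proof
    fix e assume e: "e \<in> (*) (z ^ Suc N) ` loc D P \<inter> D"
    then obtain v where v: "v \<in> loc D P" "e = z ^ Suc N * v" by blast
    have eD: "e \<in> D" using e by blast
    have "e / g \<in> loc D Q" if Q: "max_star D st Q" for Q
    proof (cases "Q = P")
      case True
      have "e / g = w * z * v" using v w g0 by (simp add: field_simps)
      thus ?thesis using True loc_mult[OF PP loc_mult[OF PP w(1) zV] v(1)] by simp
    next
      case False
      hence "g \<notin> Q" using U Q by blast
      thus ?thesis using loc_memI eD gD by blast
    qed
    hence "e / g \<in> D" using in_if_in_all_loc qfI eD gD g0 by blast
    moreover have "e = g * (e / g)" using g0 by simp
    ultimately show "e \<in> princ D g" using princ_memI by metis
  qed
  thus "\<exists>n\<ge>1. (*) (z ^ n) ` loc D (M_of D st (princ D g)) \<inter> D \<subseteq> princ D g"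
    using M by (intro exI[of _ "Suc N"]) simp
qed

lemma isolated_fhomog_type1:
  assumes "isolated_in P g"
  shows "fhomog_type1 D st (princ D g)"
proof -
  have "\<exists>y. J = princ D y" if "finite_type D st J" for J
    using finite_type_eq_princ[OF that] by blast
  thus ?thesis
    unfolding fhomog_type1_def star_fhomog_def
    using isolated_star_homog[OF assms] isolated_homog_type1[OF assms] by blast
qed

lemma split_off_isolated:
  assumes x: "x \<in> D" "x \<noteq> 0" "\<not> is_unit_in D x"
  obtains P g a where "isolated_in P g" "a \<in> D" "x = g * a"
    "card {Q. max_star D st Q \<and> a \<in> Q} < card {Q. max_star D st Q \<and> x \<in> Q}"
proof -
  let ?S = "{Q. max_star D st Q \<and> x \<in> Q}"
  obtain P where P: "max_star D st P" "x \<in> P" using ex_max_star_of_nonunit x by blast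
  have fin: "finite ?S" using finite_max_star_containing x by blast
  obtain g a where ga: "g \<in> D" "a \<in> D" "x = g * a" "a \<notin> P" "\<forall>Q\<in>?S - {P}. g \<notin> Q"
    using split_off_max_star[OF P(1) P(2) x(2), of "?S - {P}"] fin by blast
  have "g * a \<in> P" using ga(3) P(2) by simp
  hence "g \<in> P" using prime_idealD[OF prime_ideal_max_star[OF P(1)] ga(1,2)] ga(4) by blast
  moreover have "g \<noteq> 0" using ga(3) x(2) by auto
  moreover have "Q = P" if Q: "max_star D st Q" "g \<in> Q" for Q
  proof (rule ccontr)
    assume "Q \<noteq> P"
    moreover have "x \<in> Q" using submod_mult_right[OF max_star_submod[OF Q(1)] ga(2) Q(2)] ga(3) by simp
    ultimately show False using ga(5) Q by blast
  qed
  ultimately have g: "isolated_in P g" unfolding isolated_in_def using P(1) by blast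
  have "{Q. max_star D st Q \<and> a \<in> Q} \<subseteq> ?S - {P}"
  proof
    fix Q assume "Q \<in> {Q. max_star D st Q \<and> a \<in> Q}"
    hence Q: "max_star D st Q" "a \<in> Q" by auto
    hence "x \<in> Q" using submod_mult[OF max_star_submod[OF Q(1)] ga(1) Q(2)] ga(3) by simp
    thus "Q \<in> ?S - {P}" using Q ga(4) by blast
  qed
  hence "card {Q. max_star D st Q \<and> a \<in> Q} \<le> card (?S - {P})" using card_mono fin by blast
  also have "\<dots> < card ?S" using card_Diff1_less[OF fin, of P] P by blast
  finally show ?thesis using that g ga(2,3) by blast
qed

lemma isolated_factorization:
  assumes "x \<in> D" "x \<noteq> 0"
  obtains u ys where "is_unit_in D u" "\<forall>y\<in>set ys. \<exists>P. isolated_in P y" "x = u * prod_list ys"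
proof -
  have "\<exists>u ys. is_unit_in D u \<and> (\<forall>y\<in>set ys. \<exists>P. isolated_in P y) \<and> x = u * prod_list ys"
    using assms
  proof (induction "card {P. max_star D st P \<and> x \<in> P}" arbitrary: x rule: less_induct)
    case less
    show ?case
    proof (cases "is_unit_in D x")
      case True
      thus ?thesis by (intro exI[of _ x] exI[of _ "[]"]) simp
    next
      case False
      then obtain P g a where g: "isolated_in P g" and a: "a \<in> D" "x = g * a"
        and card: "card {Q. max_star D st Q \<and> a \<in> Q} < card {Q. max_star D st Q \<and> x \<in> Q}"
        using split_off_isolated less.prems by blast
      have "a \<noteq> 0" using a less.prems(2) by auto
      then obtain u ys where f: "is_unit_in D u" "\<forall>y\<in>set ys. \<exists>P. isolated_in P y"
        "a = u * prod_list ys"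
        using less.hyps[OF card a(1)] by blast
      have "x = u * prod_list (g # ys)" using a(2) f(3) by (simp add: algebra_simps)
      moreover have "\<forall>y\<in>set (g # ys). \<exists>P. isolated_in P y" using f(2) g by auto
      ultimately show ?thesis using f(1) by blast
    qed
  qed
  thus ?thesis using that by blast
qed

lemma fhomog_factorization:
  "\<forall>x\<in>D. x \<noteq> 0 \<longrightarrow> \<not> is_unit_in D x \<longrightarrow>
    (\<exists>Is. (\<forall>I\<in>set Is. fhomog_type1 D st I) \<and> princ D x = st (ideal_prod_list D Is))"
proof (intro ballI impI)
  fix x assume x: "x \<in> D" "x \<noteq> 0"
  obtain u ys where f: "is_unit_in D u" "\<forall>y\<in>set ys. \<exists>P. isolated_in P y" "x = u * prod_list ys"
    using isolated_factorization x by blast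
  have "set ys \<subseteq> D" using f(2) isolated_in_in by blast
  moreover have "prod_list ys \<noteq> 0" using f(3) x by auto
  ultimately have "st (ideal_prod_list D (map (princ D) ys)) = princ D (prod_list ys)"
    using ideal_prod_list_princ star_princ[OF in_qf[OF prod_list_in]] by simp
  also have "\<dots> = princ D x" using princ_mult_unit[OF f(1), of "prod_list ys"] f(3) by (simp add: mult.commute)
  finally show "\<exists>Is. (\<forall>I\<in>set Is. fhomog_type1 D st I) \<and> princ D x = st (ideal_prod_list D Is)"
    using f(2) isolated_fhomog_type1 by (intro exI[of _ "map (princ D) ys"]) auto
qed

end

theorem theoremS3:
  fixes D :: "'k::field set" and st :: "'k set \<Rightarrow> 'k set"
  assumes "subring D" and "star_op D st" and "finite_character D st"
  shows "(\<forall>x\<in>D. x \<noteq> 0 \<longrightarrow> \<not> is_unit_in D x \<longrightarrow>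
            (\<exists>Is. (\<forall>I\<in>set Is. fhomog_type1 D st I) \<and>
                  princ D x = st (ideal_prod_list D Is)))
         \<longleftrightarrow> gcd_domain D \<and> star_GKD D st"
proof
  assume "\<forall>x\<in>D. x \<noteq> 0 \<longrightarrow> \<not> is_unit_in D x \<longrightarrow>
    (\<exists>Is. (\<forall>I\<in>set Is. fhomog_type1 D st I) \<and> princ D x = st (ideal_prod_list D Is))"
  then interpret star_fhomog_factorial D st
    using assms by unfold_locales
  show "gcd_domain D \<and> star_GKD D st" by (rule gcd_domain_star_GKD)
next
  assume "gcd_domain D \<and> star_GKD D st"
  then interpret gcd_star_GKD D st
    using assms by unfold_locales auto
  show "\<forall>x\<in>D. x \<noteq> 0 \<longrightarrow> \<not> is_unit_in D x \<longrightarrow>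
    (\<exists>Is. (\<forall>I\<in>set Is. fhomog_type1 D st I) \<and> princ D x = st (ideal_prod_list D Is))"
    by (rule fhomog_factorization)
qed

end
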